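(* Let $\Sigma$ be a nonsingular fan in $\mathbb R^d$. Then the following are equivalent: (a) $\Sigma$ is pairwise convex; (b) for any two adjacent maximal cones $\sigma,\tau\in\Sigma_d$, the union $\sigma_{\le1}\cup\tau_{\le1}$ is convex. If moreover $\Sigma$ is finite and complete, these are also equivalent to: (c) $\Sigma$ is pairwise positive and $\mathcal P(\Sigma)$ is convex.
   Context: A fan is nonsingular if every maximal cone is generated by a $\mathbb Z$-basis of $\mathbb Z^d$; $\Sigma_d$ is the set of $d$-dimensional cones. Two maximal cones are adjacent if they share a face of dimension $d-1$; then one can write $\sigma=\operatorname{cone}\{v_1,\ldots,v_{d-1},v_d\}$, $\tau=\operatorname{cone}\{v_1,\ldots,v_{d-1},v'_d\}$ with both generating sets $\mathbb Z$-bases. $\Sigma$ is pairwise positive if always $v_d+v'_d\in\operatorname{cone}\{v_1,\ldots,v_{d-1}\}$, and pairwise convex if always $v_d+v'_d$ equals $0$, or $v_i$ for some $1\le i\le d-1$, or $v_i+v_j$ for some $1\le i,j\le d-1$. For $\sigma\in\Sigma_d$ generated by a basis $v_1,\dots,v_d$, $\sigma_{\le1}=\operatorname{conv}\{0,v_1,\ldots,v_d\}$, and $\mathcal P(\Sigma)=\bigcup_{\sigma\in\Sigma_d}\sigma_{\le1}$. $\Sigma$ is complete if the union of its cones is $\mathbb R^d$. *)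

theory Defs
  imports "HOL-Analysis.Analysis"
begin

definition lattice_vec :: "real^'n \<Rightarrow> bool" where
  "lattice_vec v \<longleftrightarrow> (\<forall>i. v $ i \<in> \<int>)"

definition cone_gen :: "(real^'n) set \<Rightarrow> (real^'n) set" where
  "cone_gen V = {x. \<exists>c. (\<forall>v\<in>V. c v \<ge> 0) \<and> x = (\<Sum>v\<in>V. c v *\<^sub>R v)}"

definition int_span :: "(real^'n) set \<Rightarrow> (real^'n) set" where
  "int_span V = {x. \<exists>c. (\<forall>v\<in>V. c v \<in> \<int>) \<and> x = (\<Sum>v\<in>V. c v *\<^sub>R v)}"

definition Zbasis :: "(real^'n) set \<Rightarrow> bool" where
  "Zbasis B \<longleftrightarrow> finite B \<and> card B = CARD('n) \<and> (\<forall>b\<in>B. lattice_vec b) \<and>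
     independent B \<and> int_span B = {x. lattice_vec x}"

definition fan :: "(real^'n) set set \<Rightarrow> bool" where
  "fan \<Sigma> \<longleftrightarrow>
     (\<forall>\<sigma>\<in>\<Sigma>. \<exists>V. finite V \<and> (\<forall>v\<in>V. lattice_vec v) \<and> \<sigma> = cone_gen V) \<and>
     (\<forall>\<sigma>\<in>\<Sigma>. \<sigma> \<inter> uminus ` \<sigma> = {0}) \<and>
     (\<forall>\<sigma>\<in>\<Sigma>. \<forall>\<tau>. \<tau> face_of \<sigma> \<and> \<tau> \<noteq> {} \<longrightarrow> \<tau> \<in> \<Sigma>) \<and>
     (\<forall>\<sigma>\<in>\<Sigma>. \<forall>\<tau>\<in>\<Sigma>. (\<sigma> \<inter> \<tau>) face_of \<sigma> \<and> (\<sigma> \<inter> \<tau>) face_of \<tau>)"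

definition maximal_cone :: "(real^'n) set set \<Rightarrow> (real^'n) set \<Rightarrow> bool" where
  "maximal_cone \<Sigma> \<sigma> \<longleftrightarrow> \<sigma> \<in> \<Sigma> \<and> \<not> (\<exists>\<tau>\<in>\<Sigma>. \<sigma> \<subset> \<tau>)"

definition top_cones :: "(real^'n) set set \<Rightarrow> (real^'n) set set" where
  "top_cones \<Sigma> = {\<sigma>\<in>\<Sigma>. dim \<sigma> = CARD('n)}"

definition nonsingular :: "(real^'n) set set \<Rightarrow> bool" where
  "nonsingular \<Sigma> \<longleftrightarrow> (\<forall>\<sigma>. maximal_cone \<Sigma> \<sigma> \<longrightarrow> (\<exists>B. Zbasis B \<and> \<sigma> = cone_gen B))"

definition adjacent :: "(real^'n) set set \<Rightarrow> (real^'n) set \<Rightarrow> (real^'n) set \<Rightarrow> bool" where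
  "adjacent \<Sigma> \<sigma> \<tau> \<longleftrightarrow> \<sigma> \<in> top_cones \<Sigma> \<and> \<tau> \<in> top_cones \<Sigma> \<and> \<sigma> \<noteq> \<tau> \<and>
     dim (\<sigma> \<inter> \<tau>) = CARD('n) - 1"

definition adjacent_pres ::
  "(real^'n) set set \<Rightarrow> (real^'n) set \<Rightarrow> (real^'n) set \<Rightarrow> (real^'n) set \<Rightarrow> real^'n \<Rightarrow> real^'n \<Rightarrow> bool" where
  "adjacent_pres \<Sigma> \<sigma> \<tau> W u u' \<longleftrightarrow> adjacent \<Sigma> \<sigma> \<tau> \<and> u \<notin> W \<and> u' \<notin> W \<and>
     Zbasis (insert u W) \<and> Zbasis (insert u' W) \<and>
     \<sigma> = cone_gen (insert u W) \<and> \<tau> = cone_gen (insert u' W)"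

definition pairwise_positive :: "(real^'n) set set \<Rightarrow> bool" where
  "pairwise_positive \<Sigma> \<longleftrightarrow>
     (\<forall>\<sigma> \<tau> W u u'. adjacent_pres \<Sigma> \<sigma> \<tau> W u u' \<longrightarrow> u + u' \<in> cone_gen W)"

definition pairwise_convex :: "(real^'n) set set \<Rightarrow> bool" where
  "pairwise_convex \<Sigma> \<longleftrightarrow>
     (\<forall>\<sigma> \<tau> W u u'. adjacent_pres \<Sigma> \<sigma> \<tau> W u u' \<longrightarrow>
        u + u' = 0 \<or> (\<exists>a\<in>W. u + u' = a) \<or> (\<exists>a\<in>W. \<exists>b\<in>W. u + u' = a + b))"

text \<open>sigma_{<=1} = conv{0, v_1, ..., v_d} for sigma generated by the Z-basis v_1..v_d.
  (The generating Z-basis of a cone is unique, so the union is over one set.)\<close>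
definition unit_part :: "(real^'n) set \<Rightarrow> (real^'n) set" where
  "unit_part \<sigma> = \<Union>{convex hull (insert 0 B) | B. Zbasis B \<and> \<sigma> = cone_gen B}"

definition fan_polytope :: "(real^'n) set set \<Rightarrow> (real^'n) set" where
  "fan_polytope \<Sigma> = (\<Union>\<sigma>\<in>top_cones \<Sigma>. unit_part \<sigma>)"

definition complete_fan :: "(real^'n) set set \<Rightarrow> bool" where
  "complete_fan \<Sigma> \<longleftrightarrow> \<Union>\<Sigma> = UNIV"

end

theory Submission
  imports Defs
begin

(*
  For a basis B let coord_sum B be the linear form that equals 1 on every element of B, so that
  sigma_{<=1} is the part of sigma = cone B where coord_sum B <= 1.  If two adjacent maximal cones
  are cone (insert u W) and cone (insert u' W), unimodularity of both bases forces the wall relation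
  u + u' = sum_{a in W} k_a a with integers k_a.  Both (a) and (b) then amount to "all k_a >= 0 and
  sum k_a <= 2": under this condition the union of the two unit simplices is the polyhedron cut
  out by their common inequalities, and conversely the midpoint of u and u' has to lie in one of
  the two simplices.

  For (c), pairwise convexity says that the piecewise linear function equal to coord_sum on each
  maximal cone is convex across every wall.  Walking along a generic segment from the barycentre
  of a maximal cone sigma and crossing one wall at a time shows that the form of sigma is bounded
  by the form of rho on every maximal cone rho, so P(Sigma) is the intersection of the half-spaces
  where these forms are at most 1.  Conversely, if P(Sigma) is convex and u + u' lies in cone W,
  then the midpoint of u and u' lies in P(Sigma) and in sigma, hence in sigma_{<=1}, which again
  gives the condition on the k_a.
*)

definition is_basis :: "'a::real_vector set \<Rightarrow> bool" where
  "is_basis B \<longleftrightarrow> finite B \<and> independent B \<and> span B = UNIV"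

definition coord_sum :: "'a::real_vector set \<Rightarrow> 'a \<Rightarrow> real" where
  "coord_sum B x = (\<Sum>b\<in>B. representation B x b)"

lemma is_basis_sum_representation:
  "is_basis B \<Longrightarrow> (\<Sum>b\<in>B. representation B x b *\<^sub>R b) = x"
  by (intro sum_representation_eq) (auto simp: is_basis_def)

lemma is_basis_representation_simps:
  assumes "is_basis B"
  shows "representation B (x + y) b = representation B x b + representation B y b"
    and "representation B (x - y) b = representation B x b - representation B y b"
    and "representation B (- x) b = - representation B x b"
    and "representation B (r *\<^sub>R x) b = r * representation B x b"
    and "representation B (sum f I) b = (\<Sum>i\<in>I. representation B (f i) b)"
  using assms
  by (simp_all add: is_basis_def representation_add representation_diff representation_neg
      representation_scale representation_sum)

lemma is_basis_representation_of_basis: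
  "is_basis B \<Longrightarrow> v \<in> B \<Longrightarrow> representation B v b = (if b = v then 1 else 0)"
  by (simp add: is_basis_def representation_basis)

lemma representation_sum_scaleR:
  fixes B :: "'a::real_vector set"
  assumes "independent B" "finite S" "S \<subseteq> B"
  shows "representation B (\<Sum>v\<in>S. c v *\<^sub>R v) b = (if b \<in> S then c b else 0)"
proof -
  have "representation B (\<Sum>v\<in>S. c v *\<^sub>R v) = (\<lambda>b. \<Sum>v\<in>S. representation B (c v *\<^sub>R v) b)"
    by (rule representation_sum[OF assms(1)]) (use assms(3) in \<open>auto intro: span_scale span_base\<close>)
  then have "representation B (\<Sum>v\<in>S. c v *\<^sub>R v) b = (\<Sum>v\<in>S. representation B (c v *\<^sub>R v) b)"
    by simp
  also have "\<dots> = (\<Sum>v\<in>S. if b = v then c v else 0)"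
    using assms(1,3)
    by (intro sum.cong) (auto simp: representation_scale representation_basis span_base)
  finally show ?thesis using assms(2) by simp
qed

lemma is_basis_representation_sum_subset:
  assumes "is_basis B" "S \<subseteq> B"
  shows "representation B (\<Sum>v\<in>S. c v *\<^sub>R v) b = (if b \<in> S then c b else 0)"
  using representation_sum_scaleR[of B S c b] finite_subset[OF assms(2)] assms
  by (simp add: is_basis_def)

lemma is_basis_sum_representation_subset:
  assumes "is_basis B" "S \<subseteq> B" "\<forall>b\<in>B-S. representation B x b = 0"
  shows "(\<Sum>b\<in>S. representation B x b *\<^sub>R b) = x"
proof -
  have "finite B" using assms by (simp add: is_basis_def)
  then have "(\<Sum>b\<in>S. representation B x b *\<^sub>R b) = (\<Sum>b\<in>B. representation B x b *\<^sub>R b)"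
    using assms by (intro sum.mono_neutral_cong_left) auto
  then show ?thesis using is_basis_sum_representation[OF assms(1)] by simp
qed

lemma is_basis_coord_sum_simps:
  assumes "is_basis B"
  shows "coord_sum B (x + y) = coord_sum B x + coord_sum B y"
    and "coord_sum B (x - y) = coord_sum B x - coord_sum B y"
    and "coord_sum B (r *\<^sub>R x) = r * coord_sum B x"
  using assms
  by (simp_all add: coord_sum_def is_basis_representation_simps sum.distrib sum_subtractf
      sum_distrib_left)

lemma coord_sum_sum_subset:
  assumes "is_basis B" "S \<subseteq> B"
  shows "coord_sum B (\<Sum>v\<in>S. c v *\<^sub>R v) = sum c S"
proof -
  have "finite B" using assms by (simp add: is_basis_def)
  then have "(\<Sum>b\<in>B. if b \<in> S then c b else 0) = sum c S"
    using assms(2) by (simp add: sum.If_cases Int_absorb1)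
  then show ?thesis
    by (simp add: coord_sum_def is_basis_representation_sum_subset[OF assms])
qed

lemma linear_representation_is_basis: "is_basis B \<Longrightarrow> linear (\<lambda>x. representation B x b)"
  by (rule linearI) (simp_all add: is_basis_representation_simps)

lemma linear_coord_sum: "is_basis B \<Longrightarrow> linear (coord_sum B)"
  by (rule linearI) (simp_all add: is_basis_coord_sum_simps)

lemma continuous_on_linear_euclidean:
  fixes f :: "'a::euclidean_space \<Rightarrow> 'b::real_normed_vector"
  shows "linear f \<Longrightarrow> continuous_on S f"
  by (intro linear_continuous_on linear_conv_bounded_linear[THEN iffD1])

lemma convex_linear_le: "linear f \<Longrightarrow> convex {x. f x \<le> (c::real)}"
  using convex_linear_vimage[of f "{..c}"] by (simp add: vimage_def)

lemma convex_linear_ge: "linear f \<Longrightarrow> convex {x. (c::real) \<le> f x}"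
  using convex_linear_vimage[of f "{c..}"] by (simp add: vimage_def)

lemma sum_insert_scaleR_if:
  assumes "finite W" "u \<notin> W"
  shows "(\<Sum>v\<in>insert u W. (if v = u then x else c v) *\<^sub>R v) = x *\<^sub>R u + (\<Sum>v\<in>W. c v *\<^sub>R v)"
proof -
  have "(\<Sum>v\<in>W. (if v = u then x else c v) *\<^sub>R v) = (\<Sum>v\<in>W. c v *\<^sub>R v)"
    using assms(2) by (intro sum.cong) auto
  then show ?thesis using assms by simp
qed

section \<open>Simplicial cones\<close>

lemma convex_cone_cone_gen: "convex_cone (cone_gen V)"
  unfolding convex_cone_iff
proof (intro conjI ballI allI impI)
  show "0 \<in> cone_gen V"
    unfolding cone_gen_def by (intro CollectI exI[of _ "\<lambda>_. 0"]) auto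
next
  fix x y assume "x \<in> cone_gen V" "y \<in> cone_gen V"
  then obtain c d where "\<forall>v\<in>V. 0 \<le> c v" "x = (\<Sum>v\<in>V. c v *\<^sub>R v)"
      "\<forall>v\<in>V. 0 \<le> d v" "y = (\<Sum>v\<in>V. d v *\<^sub>R v)"
    by (auto simp: cone_gen_def)
  then show "x + y \<in> cone_gen V"
    unfolding cone_gen_def
    by (intro CollectI exI[of _ "\<lambda>v. c v + d v"]) (auto simp: scaleR_add_left sum.distrib)
next
  fix x and t :: real assume "x \<in> cone_gen V" "0 \<le> t"
  then obtain c where "\<forall>v\<in>V. 0 \<le> c v" "x = (\<Sum>v\<in>V. c v *\<^sub>R v)"
    by (auto simp: cone_gen_def)
  then show "t *\<^sub>R x \<in> cone_gen V"
    unfolding cone_gen_def using \<open>0 \<le> t\<close>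
    by (intro CollectI exI[of _ "\<lambda>v. t * c v"]) (auto simp: scaleR_sum_right)
qed

lemma generator_in_cone_gen:
  assumes "finite V" "v \<in> V"
  shows "v \<in> cone_gen V"
proof -
  have "(\<Sum>w\<in>V. (if w = v then 1 else 0) *\<^sub>R w) = v"
    using assms by (simp add: if_distrib[of "\<lambda>c. c *\<^sub>R _"] cong: if_cong)
  then show ?thesis
    unfolding cone_gen_def by (intro CollectI exI[of _ "\<lambda>w. if w = v then 1 else 0"]) auto
qed

lemma cone_gen_subset_convex_cone:
  assumes "convex_cone C" "finite V" "V \<subseteq> C"
  shows "cone_gen V \<subseteq> C"
proof
  fix x assume "x \<in> cone_gen V"
  then obtain c where c: "\<forall>v\<in>V. 0 \<le> c v" and x: "x = (\<Sum>v\<in>V. c v *\<^sub>R v)"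
    by (auto simp: cone_gen_def)
  have "(\<Sum>v\<in>U. c v *\<^sub>R v) \<in> C" if "U \<subseteq> V" for U
    using finite_subset[OF that assms(2)] that
  proof (induction U rule: finite_induct)
    case empty
    then show ?case using assms(1) by (simp add: convex_cone_iff)
  next
    case (insert a U)
    then have "c a *\<^sub>R a \<in> C" using assms c by (auto intro: convex_cone_scaleR)
    with insert show ?case using assms(1) by (auto intro: convex_cone_add)
  qed
  then show "x \<in> C" using x by blast
qed

lemma cone_gen_mono:
  assumes "finite V'" "V \<subseteq> V'"
  shows "cone_gen V \<subseteq> cone_gen V'"
proof -
  have "V \<subseteq> cone_gen V'" using assms generator_in_cone_gen by blast
  then show ?thesis
    by (rule cone_gen_subset_convex_cone[OF convex_cone_cone_gen finite_subset[OF assms(2,1)]])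
qed

lemma cone_gen_subset_span: "cone_gen V \<subseteq> span V"
  by (clarsimp simp: cone_gen_def) (intro span_sum span_scale span_base)

lemma dim_cone_gen:
  assumes "finite S" "independent S"
  shows "dim (cone_gen S) = card S"
proof -
  have "S \<subseteq> cone_gen S" using generator_in_cone_gen[OF assms(1)] by blast
  then have "span (cone_gen S) = span S"
    using cone_gen_subset_span by (metis span_mono span_span subset_antisym)
  then show ?thesis using dim_eq_card assms(2) by metis
qed

lemma cone_gen_eq_coords:
  assumes "is_basis B" "S \<subseteq> B"
  shows "cone_gen S =
    {x. (\<forall>b\<in>B. 0 \<le> representation B x b) \<and> (\<forall>b\<in>B-S. representation B x b = 0)}"
proof safe
  fix x b assume "x \<in> cone_gen S"
  then obtain c where "\<forall>v\<in>S. 0 \<le> c v" "x = (\<Sum>v\<in>S. c v *\<^sub>R v)"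
    by (auto simp: cone_gen_def)
  then show "0 \<le> representation B x b" "b \<notin> S \<Longrightarrow> representation B x b = 0"
    by (simp_all add: is_basis_representation_sum_subset[OF assms])
next
  fix x assume "\<forall>b\<in>B. 0 \<le> representation B x b" "\<forall>b\<in>B-S. representation B x b = 0"
  then show "x \<in> cone_gen S"
    using is_basis_sum_representation_subset[OF assms] assms(2)
    unfolding cone_gen_def by (intro CollectI exI[of _ "representation B x"]) auto
qed

lemma closed_cone_gen:
  fixes B :: "(real^'n) set"
  assumes "is_basis B"
  shows "closed (cone_gen B)"
proof -
  have "cone_gen B = (\<Inter>b\<in>B. {x. 0 \<le> representation B x b})"
    by (auto simp: cone_gen_eq_coords[OF assms order_refl])
  moreover have "closed (\<Inter>b\<in>B. {x. 0 \<le> representation B x b})"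
    by (intro closed_INT ballI closed_Collect_le continuous_on_const
        continuous_on_linear_euclidean linear_representation_is_basis assms)
  ultimately show ?thesis by simp
qed

lemma convex_hull_insert_zero_eq:
  assumes "is_basis B" "S \<subseteq> B"
  shows "convex hull (insert 0 S) = cone_gen S \<inter> {x. coord_sum B x \<le> 1}"
proof -
  have fS: "finite S" and zS: "0 \<notin> S"
    using assms finite_subset dependent_zero by (auto simp: is_basis_def)
  show ?thesis
  proof safe
    fix x assume "x \<in> convex hull (insert 0 S)"
    then obtain u where u: "\<forall>v\<in>insert 0 S. 0 \<le> u v" "sum u (insert 0 S) = 1"
        "x = (\<Sum>v\<in>insert 0 S. u v *\<^sub>R v)"
      by (auto simp: convex_hull_finite fS)
    then have x: "x = (\<Sum>v\<in>S. u v *\<^sub>R v)" and "u 0 + sum u S = 1"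
      using fS zS by simp_all
    then show "x \<in> cone_gen S" "coord_sum B x \<le> 1"
      using u(1) coord_sum_sum_subset[OF assms] by (auto simp: cone_gen_def)
  next
    fix x assume "x \<in> cone_gen S" "coord_sum B x \<le> 1"
    then obtain c where c: "\<forall>v\<in>S. 0 \<le> c v" "x = (\<Sum>v\<in>S. c v *\<^sub>R v)" "sum c S \<le> 1"
      using coord_sum_sum_subset[OF assms] by (auto simp: cone_gen_def)
    define u where "u = c(0 := 1 - sum c S)"
    have "sum u S = sum c S" "(\<Sum>v\<in>S. u v *\<^sub>R v) = x"
      using zS c(2) by (auto simp: u_def intro!: sum.cong)
    then show "x \<in> convex hull (insert 0 S)"
      unfolding convex_hull_finite[OF finite.insertI[OF fS]]
      using c(1,3) fS zS by (intro CollectI exI[of _ u]) (auto simp: u_def)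
  qed
qed

lemma coord_sum_eq_on_common_face:
  assumes "is_basis B" "is_basis B'" "S \<subseteq> B" "S \<subseteq> B'" "x \<in> cone_gen S"
  shows "coord_sum B x = coord_sum B' x"
proof -
  obtain c where "x = (\<Sum>v\<in>S. c v *\<^sub>R v)" using assms(5) by (auto simp: cone_gen_def)
  then show ?thesis using coord_sum_sum_subset[OF assms(1,3)] coord_sum_sum_subset[OF assms(2,4)]
    by simp
qed

lemma face_of_convex_cone_summand:
  assumes F: "F face_of C" and C: "convex_cone C" and yz: "y \<in> C" "z \<in> C" "y + z \<in> F"
  shows "y \<in> F"
proof -
  have conicF: "conic F"
    using face_of_conic[OF _ F] C by (simp add: convex_cone_def)
  have "2 *\<^sub>R y \<in> F"
  proof (cases "y = z")
    case True
    then show ?thesis using yz(3) by (simp add: scaleR_2)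
  next
    case False
    have "y + z = midpoint (2 *\<^sub>R y) (2 *\<^sub>R z)" by (simp add: midpoint_def algebra_simps)
    then have "y + z \<in> open_segment (2 *\<^sub>R y) (2 *\<^sub>R z)"
      using False midpoint_in_open_segment by (metis scaleR_cancel_left zero_neq_numeral)
    moreover have "2 *\<^sub>R y \<in> C" "2 *\<^sub>R z \<in> C" using C yz by (auto intro: convex_cone_scaleR)
    ultimately show ?thesis using F yz(3) by (auto simp: face_of_def)
  qed
  then show ?thesis using conicD[OF conicF, of "2 *\<^sub>R y" "1/2"] by simp
qed

lemma face_of_cone_gen_basis:
  assumes B: "is_basis B" and F: "F face_of cone_gen B" "F \<noteq> {}"
  shows "F = cone_gen {b\<in>B. b \<in> F}"
proof -
  have conicF: "conic F"
    using face_of_conic[OF _ F(1)] convex_cone_cone_gen[of B] by (simp add: convex_cone_def)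
  have "b \<in> F" if x: "x \<in> F" and b: "b \<in> B" and nz: "representation B x b \<noteq> 0" for x b
  proof -
    define r where "r = representation B x b"
    have "x \<in> cone_gen B" using x face_of_imp_subset[OF F(1)] by blast
    then have "0 \<le> r" "r *\<^sub>R b \<in> cone_gen B" "x - r *\<^sub>R b \<in> cone_gen B"
      using b B by (auto simp: cone_gen_eq_coords[OF B order_refl] r_def
          is_basis_representation_simps is_basis_representation_of_basis)
    then have "0 \<le> r" "r *\<^sub>R b \<in> F"
      using face_of_convex_cone_summand[OF F(1) convex_cone_cone_gen] x by simp_all
    then show "b \<in> F" using conicD[OF conicF, of "r *\<^sub>R b" "1 / r"] nz by (simp add: r_def)
  qed
  then have "F \<subseteq> cone_gen {b\<in>B. b \<in> F}"
    using face_of_imp_subset[OF F(1)] by (force simp: cone_gen_eq_coords[OF B])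
  moreover have "cone_gen {b\<in>B. b \<in> F} \<subseteq> F"
    using conicF face_of_imp_convex[OF F(1)] F(2) B
    by (intro cone_gen_subset_convex_cone) (auto simp: convex_cone_def is_basis_def)
  ultimately show ?thesis by blast
qed

section \<open>Unimodular cones\<close>

lemma Ints_pos_ge_one: "(x::real) \<in> \<int> \<Longrightarrow> 0 < x \<Longrightarrow> 1 \<le> x"
  by (elim Ints_cases) simp

lemma Ints_mult_eq_one:
  assumes "(x::real) \<in> \<int>" "y \<in> \<int>" "x * y = 1"
  shows "x = 1 \<or> x = -1"
proof -
  obtain i j where ij: "x = of_int i" "y = of_int j" using assms(1,2) Ints_cases by metis
  then have "of_int (i * j) = (1::real)" using assms(3) by simp
  then have "i * j = 1" by (simp only: of_int_eq_1_iff)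
  then show ?thesis using ij zmult_eq_1_iff by auto
qed

lemma Zbasis_imp_is_basis:
  fixes B :: "(real^'n) set"
  assumes "Zbasis B"
  shows "is_basis B"
proof -
  have "finite B" "independent B" "card B = CARD('n)"
    using assms by (auto simp: Zbasis_def)
  moreover have "span B = UNIV"
    using card_ge_dim_independent[of B UNIV] calculation by (auto simp: dim_UNIV)
  ultimately show ?thesis by (simp add: is_basis_def)
qed

lemma representation_Zbasis_Ints:
  assumes B: "Zbasis B" and x: "lattice_vec x"
  shows "representation B x b \<in> \<int>"
proof (cases "b \<in> B")
  case True
  have "x \<in> int_span B" using B x by (simp add: Zbasis_def)
  then obtain c where "\<forall>v\<in>B. c v \<in> \<int>" "x = (\<Sum>v\<in>B. c v *\<^sub>R v)"
    by (auto simp: int_span_def)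
  then show ?thesis
    using True is_basis_representation_sum_subset[OF Zbasis_imp_is_basis[OF B] order_refl] by simp
next
  case False
  then show ?thesis using representation_ne_zero by (metis Ints_0)
qed

lemma Zbasis_positive_multiple_eq:
  assumes B: "Zbasis B" "Zbasis B'" and s: "s \<in> B" and v: "v \<in> B'"
    and eq: "v = \<mu> *\<^sub>R s" and pos: "0 < \<mu>"
  shows "v = s"
proof -
  have lattice: "lattice_vec s" "lattice_vec v" using B s v by (auto simp: Zbasis_def)
  have "representation B v s = \<mu>"
    using Zbasis_imp_is_basis[OF B(1)] s
    by (simp add: eq is_basis_representation_simps is_basis_representation_of_basis)
  then have "\<mu> \<in> \<int>" using representation_Zbasis_Ints[OF B(1) lattice(2)] by metis
  have "s = (1 / \<mu>) *\<^sub>R v" using eq pos by simp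
  then have "representation B' s v = 1 / \<mu>"
    using Zbasis_imp_is_basis[OF B(2)] v
    by (simp add: is_basis_representation_simps is_basis_representation_of_basis)
  then have "1 / \<mu> \<in> \<int>" using representation_Zbasis_Ints[OF B(2) lattice(1)] by metis
  have "1 \<le> \<mu>" "1 \<le> 1 / \<mu>"
    using Ints_pos_ge_one \<open>\<mu> \<in> \<int>\<close> \<open>1 / \<mu> \<in> \<int>\<close> pos by simp_all
  then have "\<mu> = 1" using pos by (simp add: le_divide_eq_1_pos)
  then show ?thesis using eq by simp
qed

lemma generator_mem_of_cone_gen_eq:
  assumes B: "Zbasis B" "Zbasis B'" and S: "S \<subseteq> B" "S' \<subseteq> B'"
    and eq: "cone_gen S = cone_gen S'" and s: "s \<in> S"
  shows "s \<in> S'"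
proof -
  have bB: "is_basis B" and bB': "is_basis B'" using B Zbasis_imp_is_basis by auto
  have fin: "finite S" "finite S'" using bB bB' S finite_subset by (auto simp: is_basis_def)
  \<comment> \<open>Writing s as a nonnegative combination of S' forces some element of S' to be a positive
    multiple of s, and lattice basis vectors have no proper positive multiples in the lattice.\<close>
  define c where "c = representation B' s"
  have "s \<in> cone_gen S'" using generator_in_cone_gen[OF fin(1) s] eq by simp
  then have c_nonneg: "\<forall>v\<in>S'. 0 \<le> c v" and s_eq: "s = (\<Sum>v\<in>S'. c v *\<^sub>R v)"
    using S(2) is_basis_sum_representation_subset[OF bB' S(2), of s]
    by (auto simp: cone_gen_eq_coords[OF bB' S(2)] c_def)
  have S'_nonneg: "0 \<le> representation B v t" if "v \<in> S'" "t \<in> B" for v t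
    using generator_in_cone_gen[OF fin(2) that(1)] eq that(2)
    by (auto simp: cone_gen_eq_coords[OF bB S(1)])
  have "s \<noteq> 0" using s S(1) B(1) dependent_zero by (auto simp: Zbasis_def)
  moreover have "s = 0" if "\<forall>v\<in>S'. c v = 0" using s_eq that by simp
  ultimately obtain v where v: "v \<in> S'" "c v \<noteq> 0" by blast
  have v_coord: "representation B v t = 0" if t: "t \<in> B" "t \<noteq> s" for t
  proof -
    have "(\<Sum>w\<in>S'. c w * representation B w t) = representation B s t"
      by (subst s_eq) (simp add: is_basis_representation_simps[OF bB])
    also have "\<dots> = 0" using t s S(1) bB by (auto simp: is_basis_representation_of_basis)
    finally have "\<forall>w\<in>S'. c w * representation B w t = 0"
      using c_nonneg S'_nonneg t(1) fin(2) by (simp add: sum_nonneg_eq_0_iff)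
    then have "c v * representation B v t = 0" using v(1) by blast
    then show ?thesis using v(2) by simp
  qed
  define \<mu> where "\<mu> = representation B v s"
  have "{s} \<subseteq> B" "\<forall>b\<in>B-{s}. representation B v b = 0" using s S(1) v_coord by auto
  then have v_eq: "v = \<mu> *\<^sub>R s"
    using is_basis_sum_representation_subset[OF bB, of "{s}" v] by (simp add: \<mu>_def)
  have "v \<noteq> 0" using v(1) S(2) B(2) dependent_zero by (auto simp: Zbasis_def)
  then have "\<mu> \<noteq> 0" using v_eq by auto
  moreover have "0 \<le> \<mu>" using S'_nonneg[OF v(1), of s] s S(1) by (auto simp: \<mu>_def)
  ultimately have "0 < \<mu>" by simp
  then have "v = s" using Zbasis_positive_multiple_eq[OF B _ _ v_eq] s S v(1) by blast
  then show ?thesis using v(1) by simp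
qed

lemma cone_gen_Zbasis_subsets_eq:
  assumes "Zbasis B" "Zbasis B'" "S \<subseteq> B" "S' \<subseteq> B'" "cone_gen S = cone_gen S'"
  shows "S = S'"
  using generator_mem_of_cone_gen_eq[OF assms]
    generator_mem_of_cone_gen_eq[OF assms(2,1,4,3) assms(5)[symmetric]] by blast

(* Unique when it exists, by cone_gen_Zbasis_subsets_eq. *)
definition cone_basis :: "(real^'n) set \<Rightarrow> (real^'n) set" where
  "cone_basis \<sigma> = (SOME B. Zbasis B \<and> cone_gen B = \<sigma>)"

lemma cone_basis_cone_gen:
  assumes "Zbasis B"
  shows "cone_basis (cone_gen B) = B"
  unfolding cone_basis_def
proof (rule some_equality)
  fix B' assume "Zbasis B' \<and> cone_gen B' = cone_gen B"
  then show "B' = B" using cone_gen_Zbasis_subsets_eq[of B' B B' B] assms by simp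
qed (use assms in simp)

lemma unit_part_cone_gen:
  assumes "Zbasis B"
  shows "unit_part (cone_gen B) = convex hull (insert 0 B)"
proof -
  have "Zbasis B' \<and> cone_gen B = cone_gen B' \<longleftrightarrow> B' = B" for B'
    using assms cone_gen_Zbasis_subsets_eq[of B B' B B'] by auto
  then show ?thesis unfolding unit_part_def by simp
qed

lemma aff_dim_eq_dim_of_zero: "0 \<in> X \<Longrightarrow> aff_dim X = int (dim X)"
  using aff_dim_eq_dim[of 0 X] by (simp add: hull_inc)

lemma fan_cone:
  assumes "fan \<Sigma>" "\<sigma> \<in> \<Sigma>"
  shows "convex \<sigma>" "0 \<in> \<sigma>"
proof -
  obtain V where "\<sigma> = cone_gen V" using assms by (auto simp: fan_def)
  then have "convex_cone \<sigma>" using convex_cone_cone_gen by simp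
  then show "convex \<sigma>" "0 \<in> \<sigma>" by (simp_all add: convex_cone_def conic_contains_0)
qed

lemma top_cone_maximal:
  fixes \<Sigma> :: "(real^'n) set set"
  assumes F: "fan \<Sigma>" and s: "\<sigma> \<in> top_cones \<Sigma>"
  shows "maximal_cone \<Sigma> \<sigma>"
proof -
  have sS: "\<sigma> \<in> \<Sigma>" using s by (simp add: top_cones_def)
  then have ds: "aff_dim \<sigma> = CARD('n)"
    using s aff_dim_eq_dim_of_zero[OF fan_cone(2)[OF F sS]] by (simp add: top_cones_def)
  have False if tS: "\<tau> \<in> \<Sigma>" and lt: "\<sigma> \<subset> \<tau>" for \<tau>
  proof -
    have "(\<sigma> \<inter> \<tau>) face_of \<tau>" using F sS tS by (auto simp: fan_def)
    then have "\<sigma> face_of \<tau>" using lt by (simp add: Int_absorb2 less_imp_le)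
    then have "aff_dim \<sigma> < aff_dim \<tau>"
      using face_of_aff_dim_lt[OF fan_cone(1)[OF F tS]] lt by auto
    then show False using ds aff_dim_le_DIM[of \<tau>] by simp
  qed
  then show ?thesis using sS by (auto simp: maximal_cone_def)
qed

lemma top_cones_inter_dim_less:
  fixes \<Sigma> :: "(real^'n) set set"
  assumes F: "fan \<Sigma>" and s: "\<sigma> \<in> top_cones \<Sigma>" and t: "\<tau> \<in> top_cones \<Sigma>" and ne: "\<sigma> \<noteq> \<tau>"
  shows "dim (\<sigma> \<inter> \<tau>) < CARD('n)"
proof -
  have sS: "\<sigma> \<in> \<Sigma>" and tS: "\<tau> \<in> \<Sigma>" using s t by (auto simp: top_cones_def)
  have "\<not> \<sigma> \<subset> \<tau>" using top_cone_maximal[OF F s] tS by (auto simp: maximal_cone_def)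
  then have "\<sigma> \<inter> \<tau> \<noteq> \<sigma>" using ne by auto
  moreover have "(\<sigma> \<inter> \<tau>) face_of \<sigma>" using F sS tS by (auto simp: fan_def)
  ultimately have "aff_dim (\<sigma> \<inter> \<tau>) < aff_dim \<sigma>"
    using face_of_aff_dim_lt[OF fan_cone(1)[OF F sS]] by simp
  moreover have "aff_dim \<sigma> = CARD('n)" "aff_dim (\<sigma> \<inter> \<tau>) = dim (\<sigma> \<inter> \<tau>)"
    using s aff_dim_eq_dim_of_zero[OF fan_cone(2)[OF F sS]]
      aff_dim_eq_dim_of_zero[of "\<sigma> \<inter> \<tau>"] fan_cone(2)[OF F sS] fan_cone(2)[OF F tS]
    by (auto simp: top_cones_def)
  ultimately show ?thesis by simp
qed

lemma top_cone_interior_nonempty: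
  fixes \<Sigma> :: "(real^'n) set set"
  assumes F: "fan \<Sigma>" and s: "\<sigma> \<in> top_cones \<Sigma>"
  shows "interior \<sigma> \<noteq> {}"
proof -
  have sS: "\<sigma> \<in> \<Sigma>" and "dim \<sigma> = CARD('n)" using s by (auto simp: top_cones_def)
  then have "aff_dim \<sigma> = DIM(real^'n)"
    using aff_dim_eq_dim_of_zero[OF fan_cone(2)[OF F sS]] by simp
  then have "affine hull \<sigma> = UNIV" by (simp only: aff_dim_eq_full)
  then have "rel_interior \<sigma> = interior \<sigma>" by (rule rel_interior_interior)
  moreover have "rel_interior \<sigma> \<noteq> {}" using rel_interior_eq_empty fan_cone[OF F sS] by blast
  ultimately show ?thesis by simp
qed

lemma top_cone_basis:
  fixes \<Sigma> :: "(real^'n) set set"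
  assumes "fan \<Sigma>" "nonsingular \<Sigma>" "\<sigma> \<in> top_cones \<Sigma>"
  shows "Zbasis (cone_basis \<sigma>)" "cone_gen (cone_basis \<sigma>) = \<sigma>"
proof -
  obtain B where "Zbasis B" "\<sigma> = cone_gen B"
    using assms top_cone_maximal by (auto simp: nonsingular_def)
  then show "Zbasis (cone_basis \<sigma>)" "cone_gen (cone_basis \<sigma>) = \<sigma>"
    by (simp_all add: cone_basis_cone_gen)
qed

lemma top_cone_closed:
  fixes \<Sigma> :: "(real^'n) set set"
  assumes "fan \<Sigma>" "nonsingular \<Sigma>" "\<sigma> \<in> top_cones \<Sigma>"
  shows "closed \<sigma>"
  using closed_cone_gen[OF Zbasis_imp_is_basis[OF top_cone_basis(1)[OF assms]]]
  by (simp add: top_cone_basis(2)[OF assms])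

lemma top_cone_unit_part:
  fixes \<Sigma> :: "(real^'n) set set"
  assumes "fan \<Sigma>" "nonsingular \<Sigma>" "\<sigma> \<in> top_cones \<Sigma>"
  shows "unit_part \<sigma> = \<sigma> \<inter> {x. coord_sum (cone_basis \<sigma>) x \<le> 1}"
proof -
  note B = top_cone_basis[OF assms]
  show ?thesis
    using unit_part_cone_gen[OF B(1)] convex_hull_insert_zero_eq[OF Zbasis_imp_is_basis[OF B(1)]]
    by (simp add: B(2))
qed

lemma top_cone_inter_eq_cone_gen:
  fixes \<Sigma> :: "(real^'n) set set"
  assumes F: "fan \<Sigma>" "nonsingular \<Sigma>" and s: "\<sigma> \<in> top_cones \<Sigma>" and t: "\<tau> \<in> \<Sigma>"
  shows "\<sigma> \<inter> \<tau> = cone_gen {b \<in> cone_basis \<sigma>. b \<in> \<tau>}"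
proof -
  have sS: "\<sigma> \<in> \<Sigma>" using s by (auto simp: top_cones_def)
  note B = top_cone_basis[OF F s]
  have "(\<sigma> \<inter> \<tau>) face_of cone_gen (cone_basis \<sigma>)" using F sS t B by (auto simp: fan_def)
  moreover have "\<sigma> \<inter> \<tau> \<noteq> {}" using fan_cone(2)[OF F(1) sS] fan_cone(2)[OF F(1) t] by auto
  ultimately have face: "\<sigma> \<inter> \<tau> = cone_gen {b \<in> cone_basis \<sigma>. b \<in> \<sigma> \<inter> \<tau>}"
    by (rule face_of_cone_gen_basis[OF Zbasis_imp_is_basis[OF B(1)]])
  have "cone_basis \<sigma> \<subseteq> \<sigma>"
    using generator_in_cone_gen B Zbasis_imp_is_basis[OF B(1)] by (auto simp: is_basis_def)
  then have "{b \<in> cone_basis \<sigma>. b \<in> \<sigma> \<inter> \<tau>} = {b \<in> cone_basis \<sigma>. b \<in> \<tau>}" by blast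
  then show ?thesis using face by simp
qed

lemma top_cones_inter_common_generators:
  fixes \<Sigma> :: "(real^'n) set set"
  assumes F: "fan \<Sigma>" "nonsingular \<Sigma>" and s: "\<sigma> \<in> top_cones \<Sigma>" and t: "\<tau> \<in> top_cones \<Sigma>"
  obtains S where "S \<subseteq> cone_basis \<sigma>" "S \<subseteq> cone_basis \<tau>" "\<sigma> \<inter> \<tau> = cone_gen S"
proof -
  define S where "S = {b \<in> cone_basis \<sigma>. b \<in> \<tau>}"
  define S' where "S' = {b \<in> cone_basis \<tau>. b \<in> \<sigma>}"
  have "\<sigma> \<in> \<Sigma>" "\<tau> \<in> \<Sigma>" using s t by (auto simp: top_cones_def)
  then have "\<sigma> \<inter> \<tau> = cone_gen S" "\<tau> \<inter> \<sigma> = cone_gen S'"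
    unfolding S_def S'_def using top_cone_inter_eq_cone_gen[OF F] s t by blast+
  then have "S = S'"
    using cone_gen_Zbasis_subsets_eq[OF top_cone_basis(1)[OF F s] top_cone_basis(1)[OF F t]]
    by (auto simp: S_def S'_def Int_commute)
  then show ?thesis using that \<open>\<sigma> \<inter> \<tau> = cone_gen S\<close> by (auto simp: S_def S'_def)
qed

lemma mem_unit_part_of_mem_top_cone:
  fixes \<Sigma> :: "(real^'n) set set"
  assumes F: "fan \<Sigma>" "nonsingular \<Sigma>" and r: "\<rho> \<in> top_cones \<Sigma>" and s: "\<sigma> \<in> top_cones \<Sigma>"
    and x: "x \<in> unit_part \<rho>" "x \<in> \<sigma>"
  shows "x \<in> unit_part \<sigma>"
proof -
  obtain S where S: "S \<subseteq> cone_basis \<rho>" "S \<subseteq> cone_basis \<sigma>" "\<rho> \<inter> \<sigma> = cone_gen S"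
    using top_cones_inter_common_generators[OF F r s] .
  have "x \<in> cone_gen S" using x S(3) top_cone_unit_part[OF F r] by auto
  then have "coord_sum (cone_basis \<rho>) x = coord_sum (cone_basis \<sigma>) x"
    using coord_sum_eq_on_common_face[OF _ _ S(1,2)] Zbasis_imp_is_basis
      top_cone_basis(1)[OF F r] top_cone_basis(1)[OF F s] by blast
  then show ?thesis using x top_cone_unit_part[OF F r] top_cone_unit_part[OF F s] by auto
qed

lemma top_cone_eq_of_basis_sum_mem:
  fixes \<Sigma> :: "(real^'n) set set"
  assumes F: "fan \<Sigma>" "nonsingular \<Sigma>" and s: "\<sigma> \<in> top_cones \<Sigma>" and r: "\<rho> \<in> top_cones \<Sigma>"
    and y: "(\<Sum>b\<in>cone_basis \<sigma>. b) \<in> \<rho>"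
  shows "\<rho> = \<sigma>"
proof -
  let ?B = "cone_basis \<sigma>"
  note B = top_cone_basis[OF F s]
  have bB: "is_basis ?B" using Zbasis_imp_is_basis[OF B(1)] .
  obtain S where S: "S \<subseteq> ?B" "S \<subseteq> cone_basis \<rho>" "\<sigma> \<inter> \<rho> = cone_gen S"
    by (rule top_cones_inter_common_generators[OF F s r])
  have coord: "representation ?B (\<Sum>b\<in>?B. b) b = 1" if "b \<in> ?B" for b
    using is_basis_representation_sum_subset[OF bB order_refl, of "\<lambda>_. 1"] that by simp
  then have "(\<Sum>b\<in>?B. b) \<in> cone_gen ?B" by (simp add: cone_gen_eq_coords[OF bB order_refl])
  then have "(\<Sum>b\<in>?B. b) \<in> \<sigma>" by (simp only: B(2))
  then have "(\<Sum>b\<in>?B. b) \<in> cone_gen S" using S(3) y by blast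
  then have "?B - S = {}" using coord by (auto simp: cone_gen_eq_coords[OF bB S(1)])
  then have "S = ?B" using S(1) by blast
  then have "\<sigma> \<inter> \<rho> = \<sigma>" using S(3) B(2) by simp
  moreover have "\<not> \<sigma> \<subset> \<rho>"
    using top_cone_maximal[OF F(1) s] r by (auto simp: maximal_cone_def top_cones_def)
  ultimately show ?thesis by blast
qed

lemma complete_fan_top_cone_cover:
  fixes \<Sigma> :: "(real^'n) set set"
  assumes N: "nonsingular \<Sigma>" and fin: "finite \<Sigma>" and C: "complete_fan \<Sigma>"
  obtains \<rho> where "\<rho> \<in> top_cones \<Sigma>" "x \<in> \<rho>"
proof -
  obtain \<tau> where \<tau>: "\<tau> \<in> \<Sigma>" "x \<in> \<tau>" using C by (auto simp: complete_fan_def)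
  define A where "A = {\<tau>' \<in> \<Sigma>. \<tau> \<subseteq> \<tau>'}"
  have "finite A" "A \<noteq> {}" using fin \<tau> by (auto simp: A_def)
  then obtain m where m: "m \<in> A" and max: "\<forall>b\<in>A. m \<le> b \<longrightarrow> m = b"
    using finite_has_maximal by blast
  have "\<not> m \<subset> \<tau>'" if "\<tau>' \<in> \<Sigma>" for \<tau>'
  proof
    assume "m \<subset> \<tau>'"
    moreover from this have "\<tau>' \<in> A" using m that by (auto simp: A_def)
    ultimately show False using max by blast
  qed
  then have "maximal_cone \<Sigma> m" using m by (auto simp: maximal_cone_def A_def)
  then obtain B where B: "Zbasis B" "m = cone_gen B" using N by (auto simp: nonsingular_def)
  then have "dim m = CARD('n)"
    using dim_cone_gen[of B] Zbasis_imp_is_basis[OF B(1)] by (simp add: is_basis_def Zbasis_def)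
  then have "m \<in> top_cones \<Sigma>" using m by (simp add: top_cones_def A_def)
  moreover have "x \<in> m" using m \<tau> by (auto simp: A_def)
  ultimately show ?thesis by (rule that)
qed

lemma adjacent_sym: "adjacent \<Sigma> \<sigma> \<tau> \<Longrightarrow> adjacent \<Sigma> \<tau> \<sigma>"
  unfolding adjacent_def by (metis Int_commute)

lemma adjacent_imp_adjacent_pres:
  fixes \<Sigma> :: "(real^'n) set set"
  assumes F: "fan \<Sigma>" "nonsingular \<Sigma>" and adj: "adjacent \<Sigma> \<sigma> \<tau>"
  obtains W u u' where "adjacent_pres \<Sigma> \<sigma> \<tau> W u u'"
proof -
  have s: "\<sigma> \<in> top_cones \<Sigma>" and t: "\<tau> \<in> top_cones \<Sigma>"
    and d: "dim (\<sigma> \<inter> \<tau>) = CARD('n) - 1"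
    using adj by (auto simp: adjacent_def)
  obtain S where S: "S \<subseteq> cone_basis \<sigma>" "S \<subseteq> cone_basis \<tau>" "\<sigma> \<inter> \<tau> = cone_gen S"
    using top_cones_inter_common_generators[OF F s t] .
  note B = top_cone_basis[OF F s] and B' = top_cone_basis[OF F t]
  have bB: "is_basis (cone_basis \<sigma>)" "is_basis (cone_basis \<tau>)"
    using B(1) B'(1) Zbasis_imp_is_basis by auto
  then have "finite S" "independent S"
    using S(1) finite_subset independent_mono[of "cone_basis \<sigma>" S] by (auto simp: is_basis_def)
  then have "card S = CARD('n) - 1" using dim_cone_gen[of S] d S(3) by simp
  moreover have "card (cone_basis \<sigma>) = CARD('n)" "card (cone_basis \<tau>) = CARD('n)"
    using B(1) B'(1) by (auto simp: Zbasis_def)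
  ultimately have "card (cone_basis \<sigma> - S) = 1" "card (cone_basis \<tau> - S) = 1"
    using S(1,2) bB card_Diff_subset[OF \<open>finite S\<close>] by (auto simp: is_basis_def)
  then obtain u u' where "cone_basis \<sigma> - S = {u}" "cone_basis \<tau> - S = {u'}"
    by (meson card_1_singletonE)
  then have "cone_basis \<sigma> = insert u S" "cone_basis \<tau> = insert u' S" "u \<notin> S" "u' \<notin> S"
    using S(1,2) by auto
  then have "adjacent_pres \<Sigma> \<sigma> \<tau> S u u'"
    unfolding adjacent_pres_def using adj B(1) B'(1) B(2)[symmetric] B'(2)[symmetric] by simp
  then show ?thesis by (rule that)
qed

section \<open>Crossing a wall\<close>

lemma representation_exchange_product:
  assumes B: "is_basis (insert u W)" and B': "is_basis (insert u' W)" and "u \<notin> W" "u' \<notin> W"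
  shows "representation (insert u W) u' u * representation (insert u' W) u u' = 1"
proof -
  have fin: "finite W" using B by (simp add: is_basis_def)
  have "u = representation (insert u' W) u u' *\<^sub>R u' + (\<Sum>a\<in>W. representation (insert u' W) u a *\<^sub>R a)"
    using is_basis_sum_representation[OF B', of u] fin assms(4) by simp
  from arg_cong[OF this, of "\<lambda>x. representation (insert u W) x u"]
  have "representation (insert u W) u u =
      representation (insert u' W) u u' * representation (insert u W) u' u +
      (\<Sum>a\<in>W. representation (insert u' W) u a * representation (insert u W) a u)"
    by (simp add: is_basis_representation_simps[OF B])
  moreover have "representation (insert u W) a u = 0" if "a \<in> W" for a
    using that assms(3) is_basis_representation_of_basis[OF B] by auto
  ultimately show ?thesis
    using is_basis_representation_of_basis[OF B, of u u] by (simp add: mult.commute)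
qed

(* Moving u' far enough in the directions of W lands in both cones. *)
lemma span_inter_cone_gen_exchange:
  fixes u u' :: "real^'n"
  assumes B: "is_basis (insert u W)" and notin: "u \<notin> W" "u' \<notin> W"
    and u': "u' = u + (\<Sum>a\<in>W. k a *\<^sub>R a)"
  shows "span (cone_gen (insert u W) \<inter> cone_gen (insert u' W)) = UNIV"
proof -
  let ?C = "cone_gen (insert u W) \<inter> cone_gen (insert u' W)"
  have fin: "finite W" using B by (simp add: is_basis_def)
  have "W \<subseteq> ?C" using generator_in_cone_gen[OF finite.insertI[OF fin]] by blast
  then have W: "W \<subseteq> span ?C" using span_superset by blast
  define M where "M = (\<Sum>a\<in>W. \<bar>k a\<bar>)"
  have "0 \<le> M" by (simp add: M_def sum_nonneg)
  have kM: "0 \<le> k a + M" if "a \<in> W" for a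
    using member_le_sum[OF that, of "\<lambda>a. \<bar>k a\<bar>"] fin by (simp add: M_def)
  define p where "p = u' + (\<Sum>a\<in>W. M *\<^sub>R a)"
  have "p = (\<Sum>v\<in>insert u' W. (if v = u' then 1 else M) *\<^sub>R v)"
    using sum_insert_scaleR_if[OF fin notin(2)] by (simp add: p_def)
  then have "p \<in> cone_gen (insert u' W)"
    unfolding cone_gen_def using \<open>0 \<le> M\<close>
    by (intro CollectI exI[of _ "\<lambda>v. if v = u' then 1 else M"]) auto
  moreover have "p = (\<Sum>v\<in>insert u W. (if v = u then 1 else k v + M) *\<^sub>R v)"
    using sum_insert_scaleR_if[OF fin notin(1)]
    by (simp add: p_def u' scaleR_add_left sum.distrib)
  then have "p \<in> cone_gen (insert u W)"
    unfolding cone_gen_def using kM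
    by (intro CollectI exI[of _ "\<lambda>v. if v = u then 1 else k v + M"]) auto
  ultimately have "p \<in> ?C" by blast
  then have "p - (\<Sum>a\<in>W. (k a + M) *\<^sub>R a) \<in> span ?C"
    using W by (intro span_diff span_sum span_scale) (auto intro: span_base)
  moreover have "p - (\<Sum>a\<in>W. (k a + M) *\<^sub>R a) = u"
    by (simp add: p_def u' scaleR_add_left sum.distrib)
  ultimately have "insert u W \<subseteq> span ?C" using W by simp
  from span_mono[OF this] have "span (insert u W) \<subseteq> span ?C" by (simp only: span_span)
  then show ?thesis using B by (auto simp: is_basis_def)
qed

lemma adjacent_pres_exchange_coeff:
  fixes \<Sigma> :: "(real^'n) set set"
  assumes P: "adjacent_pres \<Sigma> \<sigma> \<tau> W u u'"
  shows "representation (insert u W) u' u = -1"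
proof -
  have Z: "Zbasis (insert u W)" "Zbasis (insert u' W)" and notin: "u \<notin> W" "u' \<notin> W"
    and cones: "\<sigma> = cone_gen (insert u W)" "\<tau> = cone_gen (insert u' W)"
    and d: "dim (\<sigma> \<inter> \<tau>) = CARD('n) - 1"
    using P unfolding adjacent_pres_def adjacent_def by blast+
  have B: "is_basis (insert u W)" "is_basis (insert u' W)" using Z Zbasis_imp_is_basis by auto
  have "lattice_vec u" "lattice_vec u'" using Z by (auto simp: Zbasis_def)
  then have "representation (insert u W) u' u \<in> \<int>" "representation (insert u' W) u u' \<in> \<int>"
    using representation_Zbasis_Ints Z by blast+
  \<comment> \<open>An integer with an integer inverse; the value 1 would make the two cones overlap in a
    full-dimensional set.\<close>
  then have "representation (insert u W) u' u = 1 \<or> representation (insert u W) u' u = -1"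
    using Ints_mult_eq_one representation_exchange_product[OF B notin] by blast
  moreover have False if c: "representation (insert u W) u' u = 1"
  proof -
    have "finite W" using B by (simp add: is_basis_def)
    then have "u' = u + (\<Sum>a\<in>W. representation (insert u W) u' a *\<^sub>R a)"
      using is_basis_sum_representation[OF B(1), of u'] notin c by simp
    from span_inter_cone_gen_exchange[OF B(1) notin this]
    have "dim (span (\<sigma> \<inter> \<tau>)) = dim (UNIV :: (real^'n) set)" by (simp add: cones)
    moreover have "CARD('n) - 1 < CARD('n)" by simp
    ultimately show False using d by (simp add: dim_UNIV)
  qed
  ultimately show ?thesis by blast
qed

(* Two simplicial cones cone (insert u W) and cone (insert u' W) on either side of the wall
   cone W, linked by the wall relation u + u' = sum k_a a. *)
locale exchange_pair =
  fixes u u' :: "real^'n" and W :: "(real^'n) set" and k :: "real^'n \<Rightarrow> real"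
  assumes basis: "is_basis (insert u W)" and basis': "is_basis (insert u' W)"
    and u_notin: "u \<notin> W" and u'_notin: "u' \<notin> W"
    and exchange: "u' = - u + (\<Sum>a\<in>W. k a *\<^sub>R a)"
begin

lemma finite_W: "finite W"
  using basis by (simp add: is_basis_def)

lemma swap: "exchange_pair u' u W k"
  by unfold_locales (use basis basis' u_notin u'_notin exchange in auto)

lemma mem_simplex_iff:
  "x \<in> convex hull (insert 0 (insert u W)) \<longleftrightarrow>
    0 \<le> representation (insert u W) x u \<and> (\<forall>a\<in>W. 0 \<le> representation (insert u W) x a) \<and>
    coord_sum (insert u W) x \<le> 1"
  using convex_hull_insert_zero_eq[OF basis order_refl] cone_gen_eq_coords[OF basis order_refl]
  by auto

lemma representation_exchange:
  fixes x :: "real^'n"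
  defines "t \<equiv> representation (insert u W) x u"
  shows "representation (insert u' W) x u' = - t"
    and "a \<in> W \<Longrightarrow> representation (insert u' W) x a = representation (insert u W) x a + t * k a"
    and "coord_sum (insert u' W) x = coord_sum (insert u W) x - (2 - sum k W) * t"
proof -
  define c where "c v = (if v = u' then - t else representation (insert u W) x v + t * k v)" for v
  have tu: "t *\<^sub>R u = (- t) *\<^sub>R u' + (\<Sum>a\<in>W. (t * k a) *\<^sub>R a)"
    unfolding exchange by (simp add: scaleR_sum_right scaleR_diff_right sum_negf)
  have "x = t *\<^sub>R u + (\<Sum>a\<in>W. representation (insert u W) x a *\<^sub>R a)"
    using is_basis_sum_representation[OF basis, of x] finite_W u_notin by (simp add: t_def)
  also have "\<dots> = (- t) *\<^sub>R u' +
      ((\<Sum>a\<in>W. representation (insert u W) x a *\<^sub>R a) + (\<Sum>a\<in>W. (t * k a) *\<^sub>R a))"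
    by (simp add: tu)
  also have "(\<Sum>a\<in>W. representation (insert u W) x a *\<^sub>R a) + (\<Sum>a\<in>W. (t * k a) *\<^sub>R a) =
      (\<Sum>a\<in>W. c a *\<^sub>R a)"
    using u'_notin by (auto simp: c_def scaleR_add_left sum.distrib[symmetric] intro!: sum.cong)
  also have "(- t) *\<^sub>R u' + (\<Sum>a\<in>W. c a *\<^sub>R a) = (\<Sum>v\<in>insert u' W. c v *\<^sub>R v)"
    using finite_W u'_notin by (simp add: c_def)
  finally have x: "x = (\<Sum>v\<in>insert u' W. c v *\<^sub>R v)" .
  show "representation (insert u' W) x u' = - t"
    by (subst x) (simp add: is_basis_representation_sum_subset[OF basis'] c_def)
  show "representation (insert u' W) x a = representation (insert u W) x a + t * k a"
    if "a \<in> W" for a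
    using that u'_notin
    by (subst x) (auto simp: is_basis_representation_sum_subset[OF basis'] c_def)
  have "sum c W = (\<Sum>a\<in>W. representation (insert u W) x a + t * k a)"
    using u'_notin by (auto simp: c_def intro!: sum.cong)
  then have "coord_sum (insert u' W) x = - t + (\<Sum>a\<in>W. representation (insert u W) x a + t * k a)"
    using finite_W u'_notin coord_sum_sum_subset[OF basis' order_refl, of c] x by (simp add: c_def)
  moreover have "coord_sum (insert u W) x = t + (\<Sum>a\<in>W. representation (insert u W) x a)"
    using finite_W u_notin by (simp add: coord_sum_def t_def)
  ultimately show "coord_sum (insert u' W) x = coord_sum (insert u W) x - (2 - sum k W) * t"
    by (simp add: sum.distrib sum_distrib_left algebra_simps)
qed

lemma mem_simplex'_iff:
  "x \<in> convex hull (insert 0 (insert u' W)) \<longleftrightarrow>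
    representation (insert u W) x u \<le> 0 \<and>
    (\<forall>a\<in>W. 0 \<le> representation (insert u W) x a + representation (insert u W) x u * k a) \<and>
    coord_sum (insert u W) x - (2 - sum k W) * representation (insert u W) x u \<le> 1"
  using exchange_pair.mem_simplex_iff[OF swap, of x] by (simp add: representation_exchange)

lemma representation_nonpos_on_cone':
  assumes "x \<in> cone_gen (insert u' W)"
  shows "representation (insert u W) x u \<le> 0"
  using assms representation_exchange(1)[of x]
  by (simp add: cone_gen_eq_coords[OF basis' order_refl])

lemma coord_sum_le_on_cone':
  assumes "sum k W \<le> 2" "x \<in> cone_gen (insert u' W)"
  shows "coord_sum (insert u W) x \<le> coord_sum (insert u' W) x"
  using assms representation_nonpos_on_cone'[OF assms(2)] representation_exchange(3)[of x]
  by (simp add: mult_nonneg_nonpos)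

lemma convex_union_simplices:
  assumes k: "\<forall>a\<in>W. 0 \<le> k a" and K: "sum k W \<le> 2"
  shows "convex (convex hull (insert 0 (insert u W)) \<union> convex hull (insert 0 (insert u' W)))"
proof -
  let ?r = "representation (insert u W)" and ?l = "coord_sum (insert u W)"
  \<comment> \<open>The union is the polyhedron given by the inequalities of both simplices other than the
    sign conditions on the coordinate of u.\<close>
  define D where "D = (\<Inter>a\<in>W. {x. 0 \<le> ?r x a}) \<inter> (\<Inter>a\<in>W. {x. 0 \<le> ?r x a + ?r x u * k a}) \<inter>
    {x. ?l x \<le> 1} \<inter> {x. ?l x - (2 - sum k W) * ?r x u \<le> 1}"
  note simps = is_basis_representation_simps[OF basis] is_basis_coord_sum_simps[OF basis]
  have "convex D"
    unfolding D_def
    by (intro convex_Int convex_INT ballI convex_linear_le convex_linear_ge linearI)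
      (simp_all add: simps algebra_simps)
  moreover have "x \<in> convex hull (insert 0 (insert u W)) \<union> convex hull (insert 0 (insert u' W)) \<longleftrightarrow>
      x \<in> D" for x
  proof (cases "0 \<le> ?r x u")
    case True
    then have "0 \<le> ?r x u * k a" if "a \<in> W" for a using k that by simp
    moreover have "0 \<le> (2 - sum k W) * ?r x u" using K True by simp
    ultimately show ?thesis
      using True unfolding Un_iff mem_simplex_iff mem_simplex'_iff D_def
      by (auto intro: add_nonneg_nonneg)
  next
    case False
    then have "?r x u * k a \<le> 0" if "a \<in> W" for a using k that by (simp add: mult_nonpos_nonneg)
    moreover have "(2 - sum k W) * ?r x u \<le> 0" using K False by (simp add: mult_nonneg_nonpos)
    ultimately show ?thesis
      using False unfolding Un_iff mem_simplex_iff mem_simplex'_iff D_def by force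
  qed
  ultimately show ?thesis by (metis (no_types, lifting) set_eqI)
qed

lemma midpoint_in_simplex_iff:
  "(1/2) *\<^sub>R (u + u') \<in> convex hull (insert 0 (insert u W)) \<longleftrightarrow>
    (\<forall>a\<in>W. 0 \<le> k a) \<and> sum k W \<le> 2"
proof -
  have m: "(1/2) *\<^sub>R (u + u') = (\<Sum>a\<in>W. (k a / 2) *\<^sub>R a)"
    by (simp add: exchange scaleR_sum_right)
  have W: "W \<subseteq> insert u W" by auto
  show ?thesis
    unfolding mem_simplex_iff m is_basis_representation_sum_subset[OF basis W]
      coord_sum_sum_subset[OF basis W]
    using u_notin by (simp add: sum_divide_distrib[symmetric])
qed

lemma midpoint_in_simplex'_iff:
  "(1/2) *\<^sub>R (u + u') \<in> convex hull (insert 0 (insert u' W)) \<longleftrightarrow>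
    (\<forall>a\<in>W. 0 \<le> k a) \<and> sum k W \<le> 2"
  using exchange_pair.midpoint_in_simplex_iff[OF swap] by (simp add: add.commute)

lemma convex_union_simplices_iff:
  "convex (convex hull (insert 0 (insert u W)) \<union> convex hull (insert 0 (insert u' W))) \<longleftrightarrow>
    (\<forall>a\<in>W. 0 \<le> k a) \<and> sum k W \<le> 2"
proof
  assume "convex (convex hull (insert 0 (insert u W)) \<union> convex hull (insert 0 (insert u' W)))"
  moreover have "u \<in> convex hull (insert 0 (insert u W))" "u' \<in> convex hull (insert 0 (insert u' W))"
    by (simp_all add: hull_inc)
  ultimately have "(1/2) *\<^sub>R u + (1/2) *\<^sub>R u' \<in>
      convex hull (insert 0 (insert u W)) \<union> convex hull (insert 0 (insert u' W))"
    by (intro convexD) auto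
  then show "(\<forall>a\<in>W. 0 \<le> k a) \<and> sum k W \<le> 2"
    using midpoint_in_simplex_iff midpoint_in_simplex'_iff by (auto simp: scaleR_add_right)
qed (use convex_union_simplices in blast)

end

definition sum_of_at_most_two :: "'a::real_vector set \<Rightarrow> 'a \<Rightarrow> bool" where
  "sum_of_at_most_two W v \<longleftrightarrow> v = 0 \<or> (\<exists>a\<in>W. v = a) \<or> (\<exists>a\<in>W. \<exists>b\<in>W. v = a + b)"

lemma pairwise_convex_iff_sum_of_at_most_two:
  "pairwise_convex \<Sigma> \<longleftrightarrow>
    (\<forall>\<sigma> \<tau> W u u'. adjacent_pres \<Sigma> \<sigma> \<tau> W u u' \<longrightarrow> sum_of_at_most_two W (u + u'))"
  by (simp add: pairwise_convex_def sum_of_at_most_two_def)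

lemma sum_of_at_most_two_imp_cone_gen:
  "finite W \<Longrightarrow> sum_of_at_most_two W v \<Longrightarrow> v \<in> cone_gen W"
  using convex_cone_cone_gen[of W] generator_in_cone_gen[of W]
  by (auto simp: sum_of_at_most_two_def convex_cone_iff)

lemma sum_scaleR_peel_unit:
  fixes W :: "'a::real_vector set"
  assumes W: "finite W" and k: "\<forall>a\<in>W. k a \<in> \<int> \<and> 0 \<le> k a" and pos: "0 < sum k W"
  obtains a k' where "a \<in> W" "\<forall>a\<in>W. k' a \<in> \<int> \<and> 0 \<le> k' a" "sum k W = sum k' W + 1"
    "(\<Sum>x\<in>W. k x *\<^sub>R x) = a + (\<Sum>x\<in>W. k' x *\<^sub>R x)"
proof -
  obtain a where a: "a \<in> W" "k a \<noteq> 0" using pos by (metis sum.neutral less_irrefl)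
  then have "1 \<le> k a" using k Ints_pos_ge_one by force
  define k' where "k' = k(a := k a - 1)"
  have "\<forall>a\<in>W. k' a \<in> \<int> \<and> 0 \<le> k' a" using k \<open>1 \<le> k a\<close> by (simp add: k'_def)
  moreover have "sum k W = sum k' W + 1" "(\<Sum>x\<in>W. k x *\<^sub>R x) = a + (\<Sum>x\<in>W. k' x *\<^sub>R x)"
    using a(1) W by (simp_all add: k'_def sum.remove algebra_simps)
  ultimately show ?thesis using that a(1) by blast
qed

lemma sum_scaleR_eq_zero_of_sum_le_zero:
  fixes W :: "'a::real_vector set"
  assumes "finite W" "\<forall>a\<in>W. 0 \<le> k a" "sum k W \<le> 0"
  shows "(\<Sum>x\<in>W. k x *\<^sub>R x) = 0"
proof -
  have "sum k W = 0" using assms(2,3) sum_nonneg[of W k] by simp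
  then have "\<forall>a\<in>W. k a = 0" using assms(1,2) sum_nonneg_eq_0_iff by blast
  then show ?thesis by (intro sum.neutral) simp
qed

lemma sum_of_at_most_two_of_coeffs:
  fixes W :: "'a::real_vector set"
  assumes W: "finite W" and k: "\<forall>a\<in>W. k a \<in> \<int> \<and> 0 \<le> k a" and K: "sum k W \<le> 2"
  shows "sum_of_at_most_two W (\<Sum>a\<in>W. k a *\<^sub>R a)"
proof (cases "sum k W \<le> 0")
  case True
  have "\<forall>a\<in>W. 0 \<le> k a" using k by blast
  then show ?thesis using sum_scaleR_eq_zero_of_sum_le_zero[OF W _ True]
    by (simp add: sum_of_at_most_two_def)
next
  case False
  then have "0 < sum k W" by simp
  then obtain a k1 where a: "a \<in> W" and k1: "\<forall>a\<in>W. k1 a \<in> \<int> \<and> 0 \<le> k1 a"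
    and K1: "sum k W = sum k1 W + 1" and eq1: "(\<Sum>x\<in>W. k x *\<^sub>R x) = a + (\<Sum>x\<in>W. k1 x *\<^sub>R x)"
    by (rule sum_scaleR_peel_unit[OF W k])
  show ?thesis
  proof (cases "sum k1 W \<le> 0")
    case True
    have "\<forall>a\<in>W. 0 \<le> k1 a" using k1 by blast
    then show ?thesis using sum_scaleR_eq_zero_of_sum_le_zero[OF W _ True] eq1 a
      by (auto simp: sum_of_at_most_two_def)
  next
    case False
    then have "0 < sum k1 W" by simp
    then obtain b k2 where b: "b \<in> W" and k2: "\<forall>a\<in>W. k2 a \<in> \<int> \<and> 0 \<le> k2 a"
      and K2: "sum k1 W = sum k2 W + 1" and eq2: "(\<Sum>x\<in>W. k1 x *\<^sub>R x) = b + (\<Sum>x\<in>W. k2 x *\<^sub>R x)"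
      by (rule sum_scaleR_peel_unit[OF W k1])
    moreover have "\<forall>a\<in>W. 0 \<le> k2 a" using k2 by blast
    moreover have "sum k2 W \<le> 0" using K K1 K2 by simp
    ultimately have "(\<Sum>x\<in>W. k2 x *\<^sub>R x) = 0"
      using sum_scaleR_eq_zero_of_sum_le_zero[OF W] by blast
    then show ?thesis using eq1 eq2 a b by (auto simp: sum_of_at_most_two_def)
  qed
qed

lemma sum_of_at_most_two_iff:
  fixes W :: "'a::real_vector set"
  assumes W: "finite W" "independent W" and k: "\<forall>a\<in>W. k a \<in> \<int>"
  shows "sum_of_at_most_two W (\<Sum>a\<in>W. k a *\<^sub>R a) \<longleftrightarrow> (\<forall>a\<in>W. 0 \<le> k a) \<and> sum k W \<le> 2"
proof
  define v where "v = (\<Sum>a\<in>W. k a *\<^sub>R a)"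
  define r where "r = representation W"
  have k_eq: "r v a = k a" if "a \<in> W" for a
    using representation_sum_scaleR[OF W(2,1) order_refl] that by (simp add: r_def v_def)
  have unit: "r b a = (if a = b then 1 else 0)" if "b \<in> W" for a b
    using representation_basis[OF W(2) that] by (simp add: r_def)
  assume "sum_of_at_most_two W (\<Sum>a\<in>W. k a *\<^sub>R a)"
  then consider "\<forall>a\<in>W. k a = 0"
    | b where "b \<in> W" "\<forall>a\<in>W. k a = (if a = b then 1 else 0)"
    | b c where "b \<in> W" "c \<in> W" "\<forall>a\<in>W. k a = (if a = b then 1 else 0) + (if a = c then 1 else 0)"
  proof (unfold sum_of_at_most_two_def v_def[symmetric], elim disjE bexE)
    assume "v = 0"
    then show thesis using that(1) k_eq by (simp add: r_def representation_zero)
  next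
    fix b assume "b \<in> W" "v = b"
    then show thesis using that(2) k_eq unit by simp
  next
    fix b c assume bc: "b \<in> W" "c \<in> W" "v = b + c"
    then have "r v a = r b a + r c a" for a
      using representation_add[OF W(2)] by (simp add: r_def span_base)
    then show thesis using that(3) bc k_eq unit by simp
  qed
  then show "(\<forall>a\<in>W. 0 \<le> k a) \<and> sum k W \<le> 2"
  proof cases
    case (2 b)
    then have "sum k W = (\<Sum>a\<in>W. if a = b then 1 else 0)" by (intro sum.cong) auto
    then show ?thesis using 2 W(1) by simp
  next
    case (3 b c)
    then have "sum k W = (\<Sum>a\<in>W. (if a = b then 1 else 0) + (if a = c then 1 else 0))"
      by (intro sum.cong) auto
    then show ?thesis using 3 W(1) by (simp add: sum.distrib)
  qed simp
qed (use sum_of_at_most_two_of_coeffs W k in blast)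

lemma adjacent_pres_exchange_pair:
  fixes \<Sigma> :: "(real^'n) set set"
  assumes P: "adjacent_pres \<Sigma> \<sigma> \<tau> W u u'"
  shows "exchange_pair u u' W (representation (insert u W) u')"
    and "\<forall>a\<in>W. representation (insert u W) u' a \<in> \<int>"
proof -
  have Z: "Zbasis (insert u W)" "Zbasis (insert u' W)" and notin: "u \<notin> W" "u' \<notin> W"
    using P unfolding adjacent_pres_def by blast+
  have B: "is_basis (insert u W)" "is_basis (insert u' W)" using Z Zbasis_imp_is_basis by auto
  have "finite W" using B by (simp add: is_basis_def)
  then have "u' = - u + (\<Sum>a\<in>W. representation (insert u W) u' a *\<^sub>R a)"
    using is_basis_sum_representation[OF B(1), of u'] notin adjacent_pres_exchange_coeff[OF P]
    by simp
  then show "exchange_pair u u' W (representation (insert u W) u')"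
    using B notin by unfold_locales
  show "\<forall>a\<in>W. representation (insert u W) u' a \<in> \<int>"
    using representation_Zbasis_Ints[OF Z(1)] Z(2) by (simp add: Zbasis_def)
qed

lemma adjacent_pres_unit_part:
  assumes P: "adjacent_pres \<Sigma> \<sigma> \<tau> W u u'"
  shows "unit_part \<sigma> = convex hull (insert 0 (insert u W))"
    and "unit_part \<tau> = convex hull (insert 0 (insert u' W))"
  using P unit_part_cone_gen by (auto simp: adjacent_pres_def)

lemma adjacent_pres_sum_of_at_most_two_iff:
  fixes \<Sigma> :: "(real^'n) set set"
  assumes P: "adjacent_pres \<Sigma> \<sigma> \<tau> W u u'"
  defines "k \<equiv> representation (insert u W) u'"
  shows "sum_of_at_most_two W (u + u') \<longleftrightarrow> (\<forall>a\<in>W. 0 \<le> k a) \<and> sum k W \<le> 2"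
proof -
  interpret exchange_pair u u' W k
    unfolding k_def by (rule adjacent_pres_exchange_pair[OF P])
  have "independent W" using basis independent_mono by (auto simp: is_basis_def)
  moreover have "u + u' = (\<Sum>a\<in>W. k a *\<^sub>R a)" by (simp add: exchange)
  ultimately show ?thesis
    using sum_of_at_most_two_iff[OF finite_W] adjacent_pres_exchange_pair(2)[OF P]
    by (simp add: k_def)
qed

lemma adjacent_pres_convex_unit_parts_iff:
  fixes \<Sigma> :: "(real^'n) set set"
  assumes P: "adjacent_pres \<Sigma> \<sigma> \<tau> W u u'"
  shows "convex (unit_part \<sigma> \<union> unit_part \<tau>) \<longleftrightarrow> sum_of_at_most_two W (u + u')"
proof -
  interpret exchange_pair u u' W "representation (insert u W) u'"
    by (rule adjacent_pres_exchange_pair[OF P])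
  show ?thesis
    using convex_union_simplices_iff adjacent_pres_unit_part[OF P]
      adjacent_pres_sum_of_at_most_two_iff[OF P] by simp
qed

lemma pairwise_convex_iff_convex_unit_parts:
  fixes \<Sigma> :: "(real^'n) set set"
  assumes "fan \<Sigma>" "nonsingular \<Sigma>"
  shows "pairwise_convex \<Sigma> \<longleftrightarrow>
    (\<forall>\<sigma> \<tau>. adjacent \<Sigma> \<sigma> \<tau> \<longrightarrow> convex (unit_part \<sigma> \<union> unit_part \<tau>))"
  unfolding pairwise_convex_iff_sum_of_at_most_two
  using adjacent_imp_adjacent_pres[OF assms] adjacent_pres_convex_unit_parts_iff
  by (metis adjacent_pres_def)

lemma pairwise_convex_imp_pairwise_positive:
  fixes \<Sigma> :: "(real^'n) set set"
  assumes "pairwise_convex \<Sigma>"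
  shows "pairwise_positive \<Sigma>"
  unfolding pairwise_positive_def
proof (intro allI impI)
  fix \<sigma> \<tau> W u u' assume P: "adjacent_pres \<Sigma> \<sigma> \<tau> W u u'"
  interpret exchange_pair u u' W "representation (insert u W) u'"
    by (rule adjacent_pres_exchange_pair[OF P])
  show "u + u' \<in> cone_gen W"
    using assms P finite_W sum_of_at_most_two_imp_cone_gen
    unfolding pairwise_convex_iff_sum_of_at_most_two by blast
qed

lemma pairwise_positive_convex_imp_pairwise_convex:
  fixes \<Sigma> :: "(real^'n) set set"
  assumes F: "fan \<Sigma>" "nonsingular \<Sigma>" and pos: "pairwise_positive \<Sigma>"
    and cvx: "convex (fan_polytope \<Sigma>)"
  shows "pairwise_convex \<Sigma>"
  unfolding pairwise_convex_iff_sum_of_at_most_two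
proof (intro allI impI)
  fix \<sigma> \<tau> W u u' assume P: "adjacent_pres \<Sigma> \<sigma> \<tau> W u u'"
  interpret exchange_pair u u' W "representation (insert u W) u'"
    by (rule adjacent_pres_exchange_pair[OF P])
  have s: "\<sigma> \<in> top_cones \<Sigma>" and t: "\<tau> \<in> top_cones \<Sigma>" and \<sigma>: "\<sigma> = cone_gen (insert u W)"
    using P by (auto simp: adjacent_pres_def adjacent_def)
  have "u \<in> fan_polytope \<Sigma>" "u' \<in> fan_polytope \<Sigma>"
    using adjacent_pres_unit_part[OF P] s t by (auto simp: fan_polytope_def hull_inc)
  then have "(1/2) *\<^sub>R (u + u') \<in> fan_polytope \<Sigma>"
    using convexD[OF cvx, of u u' "1/2" "1/2"] by (simp add: scaleR_add_right)
  then obtain \<rho> where r: "\<rho> \<in> top_cones \<Sigma>" and m: "(1/2) *\<^sub>R (u + u') \<in> unit_part \<rho>"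
    by (auto simp: fan_polytope_def)
  have "u + u' \<in> cone_gen W" using pos P by (auto simp: pairwise_positive_def)
  then have "u + u' \<in> cone_gen (insert u W)"
    using cone_gen_mono[OF finite.insertI[OF finite_W], of W u] by blast
  then have "(1/2) *\<^sub>R (u + u') \<in> \<sigma>"
    using convex_cone_scaleR[OF convex_cone_cone_gen, of "1/2"] \<sigma> by simp
  then have "(1/2) *\<^sub>R (u + u') \<in> unit_part \<sigma>" by (rule mem_unit_part_of_mem_top_cone[OF F r s m])
  then show "sum_of_at_most_two W (u + u')"
    using midpoint_in_simplex_iff adjacent_pres_unit_part(1)[OF P]
      adjacent_pres_sum_of_at_most_two_iff[OF P] by simp
qed

lemma pairwise_convex_coord_sum_le:
  fixes \<Sigma> :: "(real^'n) set set"
  assumes F: "fan \<Sigma>" "nonsingular \<Sigma>" and pc: "pairwise_convex \<Sigma>"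
    and adj: "adjacent \<Sigma> \<rho> \<tau>" and x: "x \<in> \<tau>"
  shows "coord_sum (cone_basis \<rho>) x \<le> coord_sum (cone_basis \<tau>) x"
proof -
  obtain W u u' where P: "adjacent_pres \<Sigma> \<rho> \<tau> W u u'"
    using adjacent_imp_adjacent_pres[OF F adj] .
  interpret exchange_pair u u' W "representation (insert u W) u'"
    by (rule adjacent_pres_exchange_pair[OF P])
  have "sum (representation (insert u W) u') W \<le> 2"
    using pc P adjacent_pres_sum_of_at_most_two_iff[OF P]
    unfolding pairwise_convex_iff_sum_of_at_most_two by blast
  moreover have "cone_basis \<rho> = insert u W" "cone_basis \<tau> = insert u' W"
    "\<tau> = cone_gen (insert u' W)"
    using P cone_basis_cone_gen by (auto simp: adjacent_pres_def)
  ultimately show ?thesis using coord_sum_le_on_cone' x by simp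
qed

section \<open>Convexity of the fan polytope\<close>

lemma negligible_low_dim_spans:
  fixes \<Sigma> :: "(real^'n) set set"
  assumes "finite \<Sigma>"
  shows "negligible (\<Union>C\<in>{C\<in>\<Sigma>. dim C + 2 \<le> CARD('n)}. span (insert y C))"
proof (rule negligible_Union)
  show "finite ((\<lambda>C. span (insert y C)) ` {C\<in>\<Sigma>. dim C + 2 \<le> CARD('n)})" using assms by simp
next
  fix T assume "T \<in> (\<lambda>C. span (insert y C)) ` {C\<in>\<Sigma>. dim C + 2 \<le> CARD('n)}"
  then obtain C where C: "dim C + 2 \<le> CARD('n)" "T = span (insert y C)" by blast
  have "dim T \<le> dim C + 1" using C(2) by (simp add: dim_insert)
  then show "negligible T" using C(1) by (intro negligible_lowdim) simp
qed

lemma finite_closed_cover_endpoint: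
  fixes f :: "real \<Rightarrow> 'a::topological_space"
  assumes fin: "finite \<T>" and cl: "\<And>T. T \<in> \<T> \<Longrightarrow> closed T" and f: "continuous_on {0..a} f"
    and a: "0 < a" and cover: "\<And>t. t \<in> {0..<a} \<Longrightarrow> \<exists>T\<in>\<T>. f t \<in> T"
  obtains T s where "T \<in> \<T>" "f a \<in> T" "s \<in> {0..<a}" "f s \<in> T"
proof -
  define M where "M = {T \<in> \<T>. \<exists>s\<in>{0..<a}. f s \<in> T}"
  have "{0..<a} \<subseteq> (\<Union>T\<in>M. {0..a} \<inter> f -` T)" using cover by (fastforce simp: M_def)
  moreover have "closed (\<Union>T\<in>M. {0..a} \<inter> f -` T)"
    using fin cl by (intro closed_UN ballI continuous_closed_preimage[OF f]) (auto simp: M_def)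
  ultimately have "closure {0..<a} \<subseteq> (\<Union>T\<in>M. {0..a} \<inter> f -` T)" by (rule closure_minimal)
  moreover have "a \<in> closure {0..<a}" using a by simp
  ultimately obtain T where "T \<in> M" "f a \<in> T" by blast
  then show ?thesis using that by (auto simp: M_def)
qed

lemma affine_nonneg_after_root:
  fixes d0 d1 :: real
  assumes "s < a" "a \<le> t" "d0 + a * d1 = 0" "d0 + s * d1 \<le> 0"
  shows "0 \<le> d0 + t * d1"
proof -
  have "0 \<le> (a - s) * d1" using assms(3,4) by (simp add: algebra_simps)
  then have "0 \<le> d1" using assms(1) by (simp add: zero_le_mult_iff)
  moreover have "d0 + t * d1 = (t - a) * d1" using assms(3) by (simp add: algebra_simps)
  ultimately show ?thesis using assms(2) by simp
qed

lemma convex_subset_closed_off_negligible: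
  fixes S :: "'a::euclidean_space set"
  assumes S: "convex S" "interior S \<noteq> {}" and G: "closed G" and N: "negligible N"
    and sub: "S - N \<subseteq> G"
  shows "S \<subseteq> G"
proof -
  have "interior N = {}"
    using N negligible_subset[OF N interior_subset] open_not_negligible[OF open_interior] by blast
  then have "closure (- N) = UNIV" by (simp add: closure_complement)
  then have "interior S \<subseteq> closure (interior S \<inter> - N)"
    using open_Int_closure_subset[OF open_interior, of S "- N"] by simp
  also have "\<dots> \<subseteq> G"
    using sub interior_subset[of S] by (intro closure_minimal G) auto
  finally have "closure (interior S) \<subseteq> G" using G by (simp add: closure_minimal)
  then show ?thesis using convex_closure_interior[OF S] closure_subset[of S] by simp
qed

lemma adjacent_of_generic_segment_point:
  fixes \<Sigma> :: "(real^'n) set set"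
  assumes F: "fan \<Sigma>" and r: "\<rho> \<in> top_cones \<Sigma>" and t: "\<tau> \<in> top_cones \<Sigma>" and ne: "\<rho> \<noteq> \<tau>"
    and x: "x \<notin> (\<Union>C\<in>{C\<in>\<Sigma>. dim C + 2 \<le> CARD('n)}. span (insert y C))"
    and a: "0 < a" and z: "y + a *\<^sub>R (x - y) \<in> \<rho> \<inter> \<tau>"
  shows "adjacent \<Sigma> \<rho> \<tau>"
proof -
  have rS: "\<rho> \<in> \<Sigma>" and tS: "\<tau> \<in> \<Sigma>" using r t by (auto simp: top_cones_def)
  moreover have "(\<rho> \<inter> \<tau>) face_of \<rho>" "\<rho> \<inter> \<tau> \<noteq> {}" using F rS tS z by (auto simp: fan_def)
  ultimately have "\<rho> \<inter> \<tau> \<in> \<Sigma>" using F unfolding fan_def by blast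
  have ys: "y \<in> span (insert y (\<rho> \<inter> \<tau>))" and zs: "y + a *\<^sub>R (x - y) \<in> span (insert y (\<rho> \<inter> \<tau>))"
    using z by (auto intro: span_base)
  have "y + (1 / a) *\<^sub>R ((y + a *\<^sub>R (x - y)) - y) \<in> span (insert y (\<rho> \<inter> \<tau>))"
    by (rule span_add[OF ys span_scale[OF span_diff[OF zs ys]]])
  moreover have "y + (1 / a) *\<^sub>R ((y + a *\<^sub>R (x - y)) - y) = x" using a by simp
  ultimately have "x \<in> span (insert y (\<rho> \<inter> \<tau>))" by simp
  then have "\<not> dim (\<rho> \<inter> \<tau>) + 2 \<le> CARD('n)" using x \<open>\<rho> \<inter> \<tau> \<in> \<Sigma>\<close> by blast
  moreover have "dim (\<rho> \<inter> \<tau>) < CARD('n)" using top_cones_inter_dim_less[OF F r t ne] .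
  ultimately show ?thesis using r t ne by (simp add: adjacent_def)
qed

lemma pairwise_convex_coord_sum_le_past_wall:
  fixes \<Sigma> :: "(real^'n) set set"
  assumes F: "fan \<Sigma>" "nonsingular \<Sigma>" and pc: "pairwise_convex \<Sigma>" and adj: "adjacent \<Sigma> \<rho> \<tau>"
    and a: "y + a *\<^sub>R d \<in> \<rho>" "y + a *\<^sub>R d \<in> \<tau>" and s: "y + s *\<^sub>R d \<in> \<tau>" "s < a"
    and t: "a \<le> t"
  shows "coord_sum (cone_basis \<tau>) (y + t *\<^sub>R d) \<le> coord_sum (cone_basis \<rho>) (y + t *\<^sub>R d)"
proof -
  define g where "g \<rho>' t' = coord_sum (cone_basis \<rho>') (y + t' *\<^sub>R d)" for \<rho>' t'
  have g: "g \<rho>' t' = coord_sum (cone_basis \<rho>') y + t' * coord_sum (cone_basis \<rho>') d"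
    if "\<rho>' \<in> top_cones \<Sigma>" for \<rho>' t'
    using Zbasis_imp_is_basis[OF top_cone_basis(1)[OF F that]]
    by (simp add: g_def is_basis_coord_sum_simps)
  define d0 where "d0 = g \<rho> 0 - g \<tau> 0"
  define d1 where "d1 = (g \<rho> 1 - g \<rho> 0) - (g \<tau> 1 - g \<tau> 0)"
  have "\<rho> \<in> top_cones \<Sigma>" "\<tau> \<in> top_cones \<Sigma>" using adj by (simp_all add: adjacent_def)
  then have d: "g \<rho> t' - g \<tau> t' = d0 + t' * d1" for t'
    using g by (simp add: d0_def d1_def algebra_simps)
  have "g \<rho> a = g \<tau> a"
    using pairwise_convex_coord_sum_le[OF F pc adj a(2)]
      pairwise_convex_coord_sum_le[OF F pc adjacent_sym[OF adj] a(1)]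
    by (simp add: g_def)
  moreover have "g \<rho> s \<le> g \<tau> s"
    using pairwise_convex_coord_sum_le[OF F pc adj s(1)] by (simp add: g_def)
  ultimately have "0 \<le> d0 + t * d1"
    using affine_nonneg_after_root[OF s(2) t] d[of a] d[of s] by simp
  then show ?thesis using d[of t] by (simp add: g_def)
qed

(* Induction on the order in which the segment f, starting at the barycentre of sigma, enters the
   maximal cones: f enters rho from a cone tau adjacent to rho, and pairwise convexity across
   their wall carries the inequality over from tau to rho. *)
lemma coord_sum_le_after_entry:
  fixes \<Sigma> :: "(real^'n) set set"
  assumes F: "fan \<Sigma>" "nonsingular \<Sigma>" and fin: "finite \<Sigma>" and C: "complete_fan \<Sigma>"
    and pc: "pairwise_convex \<Sigma>" and s: "\<sigma> \<in> top_cones \<Sigma>"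
    and x: "x \<notin> (\<Union>C\<in>{C\<in>\<Sigma>. dim C + 2 \<le> CARD('n)}. span (insert (\<Sum>b\<in>cone_basis \<sigma>. b) C))"
  defines "f \<equiv> \<lambda>t. (\<Sum>b\<in>cone_basis \<sigma>. b) + t *\<^sub>R (x - (\<Sum>b\<in>cone_basis \<sigma>. b))"
  defines "E \<equiv> \<lambda>\<rho>. {t. 0 \<le> t \<and> t \<le> 1 \<and> f t \<in> \<rho>}"
  shows "\<rho> \<in> top_cones \<Sigma> \<Longrightarrow> E \<rho> \<noteq> {} \<Longrightarrow> Inf (E \<rho>) \<le> t \<Longrightarrow>
    coord_sum (cone_basis \<sigma>) (f t) \<le> coord_sum (cone_basis \<rho>) (f t)"
proof (induction "card {\<tau>\<in>top_cones \<Sigma>. E \<tau> \<noteq> {} \<and> Inf (E \<tau>) < Inf (E \<rho>)}"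
    arbitrary: \<rho> t rule: less_induct)
  case less
  note r = less.prems(1)
  have f_cont: "continuous_on A f" for A unfolding f_def by (intro continuous_intros)
  have E_closed: "closed (E \<tau>)" if "\<tau> \<in> top_cones \<Sigma>" for \<tau>
  proof -
    have "E \<tau> = {0..1} \<inter> f -` \<tau>" by (auto simp: E_def)
    then show ?thesis
      using continuous_closed_preimage[OF f_cont _ top_cone_closed[OF F that]] by simp
  qed
  have E_bdd: "bdd_below (E \<tau>)" for \<tau> by (rule bdd_belowI[of _ 0]) (simp add: E_def)
  define a where "a = Inf (E \<rho>)"
  have aE: "a \<in> E \<rho>"
    unfolding a_def by (rule closed_contains_Inf[OF less.prems(2) E_bdd E_closed[OF r]])
  have a_le: "a \<le> t'" if "t' \<in> E \<rho>" for t' unfolding a_def by (rule cInf_lower[OF that E_bdd])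
  show ?case
  proof (cases "a = 0")
    case True
    then have "\<rho> = \<sigma>" using aE top_cone_eq_of_basis_sum_mem[OF F s r] by (simp add: E_def f_def)
    then show ?thesis by simp
  next
    case False
    then have a: "0 < a" "a \<le> 1" using aE by (auto simp: E_def)
    have "finite (top_cones \<Sigma>)" using fin by (simp add: top_cones_def)
    then obtain \<tau> s where \<tau>: "\<tau> \<in> top_cones \<Sigma>" "f a \<in> \<tau>" and s: "s \<in> {0..<a}" "f s \<in> \<tau>"
      using finite_closed_cover_endpoint[where \<T> = "top_cones \<Sigma>" and f = f and a = a] top_cone_closed[OF F]
        complete_fan_top_cone_cover[OF F(2) fin C] f_cont a(1) by metis
    have "s \<in> E \<tau>" using s a by (simp add: E_def)
    have IH: "coord_sum (cone_basis \<sigma>) (f t') \<le> coord_sum (cone_basis \<tau>) (f t')"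
      if "s \<le> t'" for t'
    proof (rule less.hyps[OF _ \<tau>(1)])
      show "card {\<tau>'\<in>top_cones \<Sigma>. E \<tau>' \<noteq> {} \<and> Inf (E \<tau>') < Inf (E \<tau>)}
          < card {\<tau>'\<in>top_cones \<Sigma>. E \<tau>' \<noteq> {} \<and> Inf (E \<tau>') < Inf (E \<rho>)}"
      proof (rule psubset_card_mono)
        have "Inf (E \<tau>) < Inf (E \<rho>)" using cInf_lower[OF \<open>s \<in> E \<tau>\<close> E_bdd] s(1) by (simp add: a_def)
        then show "{\<tau>'\<in>top_cones \<Sigma>. E \<tau>' \<noteq> {} \<and> Inf (E \<tau>') < Inf (E \<tau>)}
            \<subset> {\<tau>'\<in>top_cones \<Sigma>. E \<tau>' \<noteq> {} \<and> Inf (E \<tau>') < Inf (E \<rho>)}"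
          using \<tau>(1) \<open>s \<in> E \<tau>\<close> by auto
      qed (use \<open>finite (top_cones \<Sigma>)\<close> in simp)
      show "Inf (E \<tau>) \<le> t'" using cInf_lower[OF \<open>s \<in> E \<tau>\<close> E_bdd] that by simp
    qed (use \<open>s \<in> E \<tau>\<close> in blast)
    have "\<rho> \<noteq> \<tau>" using a_le[of s] s a by (auto simp: E_def)
    moreover have "f a \<in> \<rho>" using aE by (simp add: E_def)
    ultimately have adj: "adjacent \<Sigma> \<rho> \<tau>"
      using adjacent_of_generic_segment_point[OF F(1) r \<tau>(1) _ x a(1)] \<tau>(2) by (simp add: f_def)
    note \<open>f a \<in> \<rho>\<close>
    moreover have "a \<le> t" using less.prems(3) by (simp add: a_def)
    ultimately have "coord_sum (cone_basis \<tau>) (f t) \<le> coord_sum (cone_basis \<rho>) (f t)"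
      using pairwise_convex_coord_sum_le_past_wall[OF F pc adj] \<tau>(2) s by (simp add: f_def)
    then show ?thesis using IH[of t] s(1) \<open>a \<le> t\<close> by simp
  qed
qed

lemma pairwise_convex_coord_sum_le_on_top_cone:
  fixes \<Sigma> :: "(real^'n) set set"
  assumes F: "fan \<Sigma>" "nonsingular \<Sigma>" and fin: "finite \<Sigma>" and C: "complete_fan \<Sigma>"
    and pc: "pairwise_convex \<Sigma>" and s: "\<sigma> \<in> top_cones \<Sigma>" and r: "\<rho> \<in> top_cones \<Sigma>"
  shows "\<rho> \<subseteq> {x. coord_sum (cone_basis \<sigma>) x \<le> coord_sum (cone_basis \<rho>) x}"
proof (rule convex_subset_closed_off_negligible)
  show "convex \<rho>" "interior \<rho> \<noteq> {}"
    using r fan_cone[OF F(1)] top_cone_interior_nonempty[OF F(1) r] by (auto simp: top_cones_def)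
  show "closed {x. coord_sum (cone_basis \<sigma>) x \<le> coord_sum (cone_basis \<rho>) x}"
    using Zbasis_imp_is_basis top_cone_basis(1)[OF F s] top_cone_basis(1)[OF F r]
    by (intro closed_Collect_le continuous_on_linear_euclidean linear_coord_sum) auto
  let ?y = "\<Sum>b\<in>cone_basis \<sigma>. b"
  show "negligible (\<Union>C\<in>{C\<in>\<Sigma>. dim C + 2 \<le> CARD('n)}. span (insert ?y C))"
    by (rule negligible_low_dim_spans[OF fin])
  show "\<rho> - (\<Union>C\<in>{C\<in>\<Sigma>. dim C + 2 \<le> CARD('n)}. span (insert ?y C)) \<subseteq>
      {x. coord_sum (cone_basis \<sigma>) x \<le> coord_sum (cone_basis \<rho>) x}"
  proof clarify
    fix x assume "x \<in> \<rho>" and x: "x \<notin> (\<Union>C\<in>{C\<in>\<Sigma>. dim C + 2 \<le> CARD('n)}. span (insert ?y C))"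
    then have one: "1 \<in> {t. 0 \<le> t \<and> t \<le> 1 \<and> ?y + t *\<^sub>R (x - ?y) \<in> \<rho>}" by simp
    then have "Inf {t. 0 \<le> t \<and> t \<le> 1 \<and> ?y + t *\<^sub>R (x - ?y) \<in> \<rho>} \<le> 1"
      by (intro cInf_lower bdd_belowI[of _ 0]) auto
    moreover have "\<exists>t\<le>1. 0 \<le> t \<and> ?y + t *\<^sub>R (x - ?y) \<in> \<rho>"
      using \<open>x \<in> \<rho>\<close> by (intro exI[of _ 1]) simp
    ultimately show "coord_sum (cone_basis \<sigma>) x \<le> coord_sum (cone_basis \<rho>) x"
      using coord_sum_le_after_entry[OF F fin C pc s x r, where t = 1] by simp
  qed
qed

lemma pairwise_convex_imp_convex_fan_polytope:
  fixes \<Sigma> :: "(real^'n) set set"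
  assumes F: "fan \<Sigma>" "nonsingular \<Sigma>" and fin: "finite \<Sigma>" and C: "complete_fan \<Sigma>"
    and pc: "pairwise_convex \<Sigma>"
  shows "convex (fan_polytope \<Sigma>)"
proof -
  have "fan_polytope \<Sigma> = (\<Inter>\<sigma>\<in>top_cones \<Sigma>. {x. coord_sum (cone_basis \<sigma>) x \<le> 1})"
  proof safe
    fix x \<sigma> assume "x \<in> fan_polytope \<Sigma>" and s: "\<sigma> \<in> top_cones \<Sigma>"
    then obtain \<rho> where r: "\<rho> \<in> top_cones \<Sigma>" and "x \<in> unit_part \<rho>"
      by (auto simp: fan_polytope_def)
    then have "x \<in> \<rho>" "coord_sum (cone_basis \<rho>) x \<le> 1" using top_cone_unit_part[OF F r] by auto
    moreover have "coord_sum (cone_basis \<sigma>) x \<le> coord_sum (cone_basis \<rho>) x"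
      using pairwise_convex_coord_sum_le_on_top_cone[OF F fin C pc s r] \<open>x \<in> \<rho>\<close> by blast
    ultimately show "coord_sum (cone_basis \<sigma>) x \<le> 1" by simp
  next
    fix x assume x: "x \<in> (\<Inter>\<sigma>\<in>top_cones \<Sigma>. {x. coord_sum (cone_basis \<sigma>) x \<le> 1})"
    obtain \<rho> where r: "\<rho> \<in> top_cones \<Sigma>" "x \<in> \<rho>"
      by (rule complete_fan_top_cone_cover[OF F(2) fin C])
    then have "x \<in> unit_part \<rho>" using x top_cone_unit_part[OF F r(1)] by auto
    then show "x \<in> fan_polytope \<Sigma>" using r(1) by (auto simp: fan_polytope_def)
  qed
  moreover have "convex {x. coord_sum (cone_basis \<sigma>) x \<le> 1}" if "\<sigma> \<in> top_cones \<Sigma>" for \<sigma>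
    using Zbasis_imp_is_basis[OF top_cone_basis(1)[OF F that]]
    by (intro convex_linear_le linear_coord_sum)
  ultimately show ?thesis by (simp add: convex_INT)
qed

theorem proposition5p7:
  fixes \<Sigma> :: "(real^'n) set set"
  assumes "fan \<Sigma>" and "nonsingular \<Sigma>"
  shows "(pairwise_convex \<Sigma> \<longleftrightarrow>
            (\<forall>\<sigma> \<tau>. adjacent \<Sigma> \<sigma> \<tau> \<longrightarrow> convex (unit_part \<sigma> \<union> unit_part \<tau>)))
       \<and> (finite \<Sigma> \<and> complete_fan \<Sigma> \<longrightarrow>
            (pairwise_convex \<Sigma> \<longleftrightarrow> pairwise_positive \<Sigma> \<and> convex (fan_polytope \<Sigma>)))"
proof (intro conjI impI)
  show "pairwise_convex \<Sigma> \<longleftrightarrow>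
      (\<forall>\<sigma> \<tau>. adjacent \<Sigma> \<sigma> \<tau> \<longrightarrow> convex (unit_part \<sigma> \<union> unit_part \<tau>))"
    by (rule pairwise_convex_iff_convex_unit_parts[OF assms])
next
  assume "finite \<Sigma> \<and> complete_fan \<Sigma>"
  then show "pairwise_convex \<Sigma> \<longleftrightarrow> pairwise_positive \<Sigma> \<and> convex (fan_polytope \<Sigma>)"
    using pairwise_convex_imp_pairwise_positive pairwise_convex_imp_convex_fan_polytope[OF assms]
      pairwise_positive_convex_imp_pairwise_convex[OF assms] by blast
qed

end
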